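(* Let $d\ge3$ and let $\mathcal C\subset\mathbb T^d=\mathbb R^d/\mathbb Z^d$ be a smooth curve of length $L$ with unit speed parameterization $\gamma:[0,L]\to\mathbb T^d$. For a positive integer $E$ with $\mathcal E(E)=\{\mu\in\mathbb Z^d:|\mu|^2=E\}$ nonempty, let $N=\#\mathcal E(E)$, $F(x)=N^{-1/2}\sum_{\mu\in\mathcal E(E)}a_\mu e^{2\pi i\langle\mu,x\rangle}$ with $a_\mu$ standard complex Gaussians independent save for $a_{-\mu}=\overline{a_\mu}$, $f(t)=F(\gamma(t))$, $r(t_1,t_2)=\mathbb E[f(t_1)f(t_2)]$, $r_1=\partial r/\partial t_1$, $r_2=\partial r/\partial t_2$, $r_{12}=\partial^2r/\partial t_1\partial t_2$. Define $K_1(t)=\frac{1}{\sqrt{2\pi}}\mathbb E\left[|f'(t)|\ \big|\ f(t)=0\right]$ and, whenever $r(t_1,t_2)\ne\pm1$, $$K_2(t_1,t_2)=\frac{1}{2\pi\sqrt{1-r^2}}\mathbb E\left[|f'(t_1)|\,|f'(t_2)|\ \Big|\ f(t_1)=f(t_2)=0\right].$$ For a constant $c_0>0$ let $k=\lfloor L\sqrt E/c_0\rfloor+1$, $\delta_0=L/k$, $I_i=[(i-1)\delta_0,i\delta_0]$ ($i=1,\dots,k$), and call the cube $S_{ij}=I_i\times I_j$ singular if it contains a point $(t_1,t_2)$ with $|r(t_1,t_2)|>1/2$; let $B$ be the union of all singular cubes. Then, for $c_0>0$ sufficiently small, for all $E$ and all $(t_1,t_2)\in[0,L]^2\setminus B$,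 $$\left|K_2(t_1,t_2)-K_1(t_1)K_1(t_2)\right|=E\cdot O\left(r^2+\left(\frac{r_1}{\sqrt E}\right)^2+\left(\frac{r_2}{\sqrt E}\right)^2+\left(\frac{r_{12}}{E}\right)^2\right),$$ where $r,r_1,r_2,r_{12}$ are evaluated at $(t_1,t_2)$ and the implied constant is independent of $E,t_1,t_2$.
   Context: A curve means a parameterized, compact, immersed curve. *)

theory Defs
  imports "HOL-Analysis.Analysis" "HOL-Probability.Probability"
begin

definition smooth_on :: "real set \<Rightarrow> (real \<Rightarrow> real^'d) \<Rightarrow> bool" where
  "smooth_on S g \<longleftrightarrow> open S \<and>
     (\<exists>D :: nat \<Rightarrow> real \<Rightarrow> real^'d. (\<forall>t\<in>S. D 0 t = g t) \<and>
        (\<forall>n. \<forall>t\<in>S. (D n has_vector_derivative D (Suc n) t) (at t)))"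

definition lattice_pts :: "nat \<Rightarrow> (int^'d) set" where
  "lattice_pts E = {\<mu>. (\<Sum>i\<in>UNIV. (\<mu> $ i)^2) = int E}"

definition lat_inner :: "int^'d \<Rightarrow> real^'d \<Rightarrow> real" where
  "lat_inner \<mu> x = (\<Sum>i\<in>UNIV. of_int (\<mu> $ i) * x $ i)"

text \<open>r(t1,t2) = E[f(t1) f(t2)] = (1/N) sum over mu of exp(2 pi i <mu, gamma(t1) - gamma(t2)>),
  which is real; written with cosines.\<close>
definition cov_r :: "(real \<Rightarrow> real^'d) \<Rightarrow> nat \<Rightarrow> real \<Rightarrow> real \<Rightarrow> real" where
  "cov_r \<gamma> E t1 t2 = (1 / real (card (lattice_pts E :: (int^'d) set))) *
     (\<Sum>\<mu>\<in>(lattice_pts E :: (int^'d) set). cos (2 * pi * lat_inner \<mu> (\<gamma> t1 - \<gamma> t2)))"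

definition cov_r1 :: "(real \<Rightarrow> real^'d) \<Rightarrow> nat \<Rightarrow> real \<Rightarrow> real \<Rightarrow> real" where
  "cov_r1 \<gamma> E t1 t2 = deriv (\<lambda>s. cov_r \<gamma> E s t2) t1"

definition cov_r2 :: "(real \<Rightarrow> real^'d) \<Rightarrow> nat \<Rightarrow> real \<Rightarrow> real \<Rightarrow> real" where
  "cov_r2 \<gamma> E t1 t2 = deriv (\<lambda>s. cov_r \<gamma> E t1 s) t2"

definition cov_r12 :: "(real \<Rightarrow> real^'d) \<Rightarrow> nat \<Rightarrow> real \<Rightarrow> real \<Rightarrow> real" where
  "cov_r12 \<gamma> E t1 t2 = deriv (\<lambda>s. cov_r2 \<gamma> E s t2) t1"

definition gauss_abs_exp :: "real \<Rightarrow> real" where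
  "gauss_abs_exp w = (LINT z|lborel. std_normal_density z * \<bar>sqrt w * z\<bar>)"

text \<open>E[|W1| |W2|] for a centred Gaussian vector (W1,W2) with positive semidefinite covariance
  matrix ((a,b),(b,c)), realised as W1 = p Z1, W2 = q Z1 + s Z2 (Cholesky factor), Z1, Z2 i.i.d. N(0,1).\<close>
definition gauss_abs_prod_exp :: "real \<Rightarrow> real \<Rightarrow> real \<Rightarrow> real" where
  "gauss_abs_prod_exp a b c =
     (let p = sqrt a; q = (if a > 0 then b / sqrt a else 0); s = sqrt (c - q^2) in
      LINT z1|lborel. LINT z2|lborel.
        std_normal_density z1 * std_normal_density z2 * \<bar>p * z1\<bar> * \<bar>q * z1 + s * z2\<bar>)"

text \<open>K1(t) = (2 pi)^(-1/2) E[|f'(t)| | f(t) = 0]. The conditional law of f'(t) given f(t) = 0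
  is (Gaussian regression, Var f(t) = r(t,t)) centred Gaussian with variance
  r12(t,t) - r1(t,t)^2 / r(t,t).\<close>
definition K1 :: "(real \<Rightarrow> real^'d) \<Rightarrow> nat \<Rightarrow> real \<Rightarrow> real" where
  "K1 \<gamma> E t = (1 / sqrt (2 * pi)) *
     gauss_abs_exp (cov_r12 \<gamma> E t t - (cov_r1 \<gamma> E t t)^2 / cov_r \<gamma> E t t)"

text \<open>Conditional covariance of X = (f'(t1), f'(t2)) given Y = (f(t1), f(t2)) = 0:
  Omega = Sxx - Sxy Syy^(-1) Syx, where
  Syy = ((r(t1,t1), r(t1,t2)), (r(t2,t1), r(t2,t2))),
  Sxy = ((r1(t1,t1), r1(t1,t2)), (r1(t2,t1), r1(t2,t2)))  [Cov(f'(s), f(t)) = r1(s,t)],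
  Sxx = ((r12(t1,t1), r12(t1,t2)), (r12(t2,t1), r12(t2,t2))).\<close>
definition cond_cov :: "(real \<Rightarrow> real^'d) \<Rightarrow> nat \<Rightarrow> real \<Rightarrow> real \<Rightarrow> real^2^2" where
  "cond_cov \<gamma> E t1 t2 =
     (let tt = (\<lambda>i::2. if i = 1 then t1 else t2);
          Syy = (\<chi> i j. cov_r \<gamma> E (tt i) (tt j)) :: real^2^2;
          Sxy = (\<chi> i j. cov_r1 \<gamma> E (tt i) (tt j)) :: real^2^2;
          Sxx = (\<chi> i j. cov_r12 \<gamma> E (tt i) (tt j)) :: real^2^2
      in Sxx - Sxy ** matrix_inv Syy ** transpose Sxy)"

definition K2 :: "(real \<Rightarrow> real^'d) \<Rightarrow> nat \<Rightarrow> real \<Rightarrow> real \<Rightarrow> real" where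
  "K2 \<gamma> E t1 t2 =
     (let \<Omega> = cond_cov \<gamma> E t1 t2 in
      (1 / (2 * pi * sqrt (1 - (cov_r \<gamma> E t1 t2)^2))) *
      gauss_abs_prod_exp (\<Omega> $ 1 $ 1) (\<Omega> $ 1 $ 2) (\<Omega> $ 2 $ 2))"

definition sing_set :: "(real \<Rightarrow> real^'d) \<Rightarrow> real \<Rightarrow> nat \<Rightarrow> real \<Rightarrow> (real \<times> real) set" where
  "sing_set \<gamma> L E c0 =
     (let k = nat \<lfloor>L * sqrt (real E) / c0\<rfloor> + 1;
          \<delta>0 = L / real k;
          I = (\<lambda>i::nat. {(real i - 1) * \<delta>0 .. real i * \<delta>0})
      in \<Union>{I i \<times> I j | i j. i \<in> {1..k} \<and> j \<in> {1..k} \<and>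
                 (\<exists>s1\<in>I i. \<exists>s2\<in>I j. \<bar>cov_r \<gamma> E s1 s2\<bar> > 1/2)})"

end

theory Submission
  imports Defs
begin

text \<open>
  On the diagonal \<open>r = 1\<close>, \<open>r\<^sub>1 = 0\<close> and \<open>r\<^sub>1\<^sub>2 = v = 4\<pi>\<^sup>2 E / d\<close>: coordinate reflections and
  permutations preserve the lattice points on the sphere \<open>|\<mu>|\<^sup>2 = E\<close>, which forces their second
  moment tensor to be \<open>E / d\<close> times the identity. Hence \<open>K\<^sub>1 = 2 sqrt (E / d)\<close>, so
  \<open>K\<^sub>1(t\<^sub>1) K\<^sub>1(t\<^sub>2) = v / \<pi>\<^sup>2\<close>, while Gaussian regression expresses \<open>K\<^sub>2\<close> as the mean of \<open>|X| |Y|\<close>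
  divided by \<open>2\<pi> sqrt (1 - r\<^sup>2)\<close>, for a centred Gaussian vector \<open>(X, Y)\<close> with covariance entries
  \<open>v - r\<^sub>1\<^sup>2/(1 - r\<^sup>2)\<close>, \<open>r\<^sub>1\<^sub>2 + r r\<^sub>1 r\<^sub>2/(1 - r\<^sup>2)\<close>, \<open>v - r\<^sub>2\<^sup>2/(1 - r\<^sup>2)\<close>.

  Outside the singular set \<open>|r| \<le> 1/2\<close>. Let \<open>Q = r\<^sup>2 + r\<^sub>1\<^sup>2/E + r\<^sub>2\<^sup>2/E + r\<^sub>1\<^sub>2\<^sup>2/E\<^sup>2\<close>. If \<open>Q\<close> is small,
  this covariance is within \<open>E\<cdot>O(Q)\<close> of \<open>v\<close> times the identity, and the elementary bounds
  \<open>sqrt D \<cdot> 2/\<pi> \<le> mean of |X| |Y| \<le> sqrt D \<cdot> 2/\<pi> + b\<^sup>2 / sqrt D \<cdot> 2 sqrt (2/\<pi>)\<close>, with \<open>D\<close> the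
  determinant and \<open>b\<close> the covariance of \<open>X\<close> and \<open>Y\<close>, give \<open>|K\<^sub>2 - K\<^sub>1 K\<^sub>1| = E\<cdot>O(Q)\<close>. Otherwise
  the a priori bounds \<open>|r\<^sub>1| \<le> 2\<pi> sqrt E\<close> and \<open>|r\<^sub>1\<^sub>2| \<le> 4\<pi>\<^sup>2 E\<close> give \<open>|K\<^sub>2 - K\<^sub>1 K\<^sub>1| = O(E) = E\<cdot>O(Q)\<close>.
\<close>

section \<open>Absolute moments of Gaussian vectors\<close>

lemma std_normal_density_le_half: "std_normal_density z \<le> 1/2"
proof -
  have "2 \<le> sqrt (2 * pi)"
    using pi_gt3 by (simp add: real_le_rsqrt)
  then have "1 / sqrt (2 * pi) \<le> 1/2"
    by (simp add: field_simps)
  then have "1 / sqrt (2 * pi) * exp (- z\<^sup>2 / 2) \<le> 1/2 * 1"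
    by (intro mult_mono) auto
  then show ?thesis
    by (simp add: std_normal_density_def)
qed

lemma integral_std_normal_abs: "(LINT z|lborel. std_normal_density z * \<bar>z\<bar>) = sqrt (2 / pi)"
  using integral_std_normal_moment_abs_odd[of 0] by simp

lemma integral_std_normal_abs_cube: "(LINT z|lborel. std_normal_density z * \<bar>z\<bar>^3) = 2 * sqrt (2 / pi)"
  using integral_std_normal_moment_abs_odd[of 1] by (simp add: numeral_3_eq_3)

lemma integral_std_normal_sq: "(LINT z|lborel. std_normal_density z * z\<^sup>2) = 1"
  using integral_std_normal_moment_even[of 1] by simp

lemma integrable_std_normal_abs: "integrable lborel (\<lambda>z. std_normal_density z * \<bar>z\<bar>)"
  using integrable_std_normal_moment_abs[of 1] by simp

lemma integrable_std_normal: "integrable lborel std_normal_density"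
  using integrable_std_normal_moment_abs[of 0] by simp

lemma gauss_abs_exp_eq: "gauss_abs_exp w = \<bar>sqrt w\<bar> * sqrt (2 / pi)"
  unfolding gauss_abs_exp_def integral_std_normal_abs[symmetric]
  by (simp add: abs_mult mult.left_commute)

definition folded_normal_mean :: "real \<Rightarrow> real \<Rightarrow> real" where
  "folded_normal_mean u s = (LINT z|lborel. std_normal_density z * \<bar>u + s * z\<bar>)"

lemma std_normal_abs_affine_le:
  "std_normal_density z * \<bar>u + s * z\<bar> \<le> \<bar>u\<bar> * std_normal_density z + \<bar>s\<bar> * (std_normal_density z * \<bar>z\<bar>)"
proof -
  have "std_normal_density z * \<bar>u + s * z\<bar> \<le> std_normal_density z * (\<bar>u\<bar> + \<bar>s\<bar> * \<bar>z\<bar>)"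
    by (intro mult_left_mono normal_density_nonneg) (metis abs_mult abs_triangle_ineq)
  then show ?thesis
    by (simp add: algebra_simps)
qed

lemma integrable_std_normal_abs_affine:
  "integrable lborel (\<lambda>z. std_normal_density z * \<bar>u + s * z\<bar>)"
proof (rule Bochner_Integration.integrable_bound)
  show "integrable lborel (\<lambda>z. \<bar>u\<bar> * std_normal_density z + \<bar>s\<bar> * (std_normal_density z * \<bar>z\<bar>))"
    using integrable_std_normal integrable_std_normal_abs by auto
  show "AE z in lborel. norm (std_normal_density z * \<bar>u + s * z\<bar>)
          \<le> norm (\<bar>u\<bar> * std_normal_density z + \<bar>s\<bar> * (std_normal_density z * \<bar>z\<bar>))"
    using std_normal_abs_affine_le normal_density_nonneg by (intro AE_I2) (simp add: abs_mult)
qed simp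

lemma folded_normal_mean_nonneg: "0 \<le> folded_normal_mean u s"
  unfolding folded_normal_mean_def by (intro integral_nonneg_AE) (simp add: normal_density_nonneg)

lemma folded_normal_mean_le: "folded_normal_mean u s \<le> \<bar>u\<bar> + \<bar>s\<bar> * sqrt (2 / pi)"
proof -
  have "folded_normal_mean u s
      \<le> (LINT z|lborel. \<bar>u\<bar> * std_normal_density z + \<bar>s\<bar> * (std_normal_density z * \<bar>z\<bar>))"
    unfolding folded_normal_mean_def using integrable_std_normal integrable_std_normal_abs
    by (intro integral_mono integrable_std_normal_abs_affine std_normal_abs_affine_le) auto
  also have "\<dots> = \<bar>u\<bar> + \<bar>s\<bar> * sqrt (2 / pi)"
    using integrable_std_normal integrable_std_normal_abs
    by (simp add: integral_std_normal_abs)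
  finally show ?thesis .
qed

text \<open>Averaging the integrand over \<open>z\<close> and \<open>-z\<close> replaces \<open>\<bar>u + s z\<bar>\<close> by \<open>max \<bar>u\<bar> \<bar>s z\<bar>\<close>.\<close>

lemma folded_normal_mean_eq_max:
  "folded_normal_mean u s = (LINT z|lborel. std_normal_density z * max \<bar>u\<bar> \<bar>s * z\<bar>)"
    and integrable_std_normal_max:
  "integrable lborel (\<lambda>z. std_normal_density z * max \<bar>u\<bar> \<bar>s * z\<bar>)"
proof -
  have reflect: "folded_normal_mean u (- s) = folded_normal_mean u s"
    unfolding folded_normal_mean_def
    using lborel_integral_real_affine[of "-1" "\<lambda>z. std_normal_density z * \<bar>u + s * z\<bar>" 0]
    by (simp add: std_normal_density_def)
  have max_eq: "std_normal_density z * max \<bar>u\<bar> \<bar>s * z\<bar>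
      = std_normal_density z * \<bar>u + s * z\<bar> / 2 + std_normal_density z * \<bar>u + (- s) * z\<bar> / 2" for z
    by (auto simp: max_def abs_if field_simps)
  note integrable = integrable_std_normal_abs_affine[of u s] integrable_std_normal_abs_affine[of u "- s"]
  show "integrable lborel (\<lambda>z. std_normal_density z * max \<bar>u\<bar> \<bar>s * z\<bar>)"
    unfolding max_eq using integrable by (intro Bochner_Integration.integrable_add integrable_divide)
  have "(LINT z|lborel. std_normal_density z * max \<bar>u\<bar> \<bar>s * z\<bar>)
      = folded_normal_mean u s / 2 + folded_normal_mean u (- s) / 2"
    unfolding max_eq folded_normal_mean_def using integrable by simp
  then show "folded_normal_mean u s = (LINT z|lborel. std_normal_density z * max \<bar>u\<bar> \<bar>s * z\<bar>)"
    using reflect by simp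
qed

lemma folded_normal_mean_ge: "\<bar>s\<bar> * sqrt (2 / pi) \<le> folded_normal_mean u s"
proof -
  have "\<bar>s\<bar> * sqrt (2 / pi) = (LINT z|lborel. \<bar>s\<bar> * (std_normal_density z * \<bar>z\<bar>))"
    by (simp add: integral_std_normal_abs)
  also have "\<dots> \<le> (LINT z|lborel. std_normal_density z * max \<bar>u\<bar> \<bar>s * z\<bar>)"
  proof (intro integral_mono integrable_std_normal_max)
    show "integrable lborel (\<lambda>z. \<bar>s\<bar> * (std_normal_density z * \<bar>z\<bar>))"
      using integrable_std_normal_abs by simp
    have "std_normal_density z * \<bar>s * z\<bar> \<le> std_normal_density z * max \<bar>u\<bar> \<bar>s * z\<bar>" for z
      by (intro mult_left_mono normal_density_nonneg) simp
    then show "\<bar>s\<bar> * (std_normal_density z * \<bar>z\<bar>) \<le> std_normal_density z * max \<bar>u\<bar> \<bar>s * z\<bar>" for z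
      by (simp add: abs_mult mult.left_commute)
  qed
  finally show ?thesis
    by (simp add: folded_normal_mean_eq_max)
qed

lemma integrable_std_normal_interval:
  "integrable lborel (\<lambda>z. indicator {-t<..<t} z * std_normal_density z)"
  using integrable_mult_indicator[OF _ integrable_std_normal, of "{-t<..<t}"] by simp

lemma integral_std_normal_interval_le:
  assumes "0 \<le> t"
  shows "(LINT z|lborel. indicator {-t<..<t} z * std_normal_density z) \<le> t"
proof -
  have "(LINT z|lborel. indicator {-t<..<t} z * std_normal_density z)
      \<le> (LINT z|lborel. indicator {-t<..<t} z * (1/2::real))"
    using assms
    by (intro integral_mono integrable_std_normal_interval integrable_real_indicator mult_left_mono
          std_normal_density_le_half) auto
  also have "\<dots> = t"
    using assms by (simp add: measure_def)
  finally show ?thesis .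
qed

text \<open>The excess of \<open>max \<bar>u\<bar> \<bar>s z\<bar>\<close> over \<open>\<bar>s z\<bar>\<close> lives on \<open>\<bar>z\<bar> < \<bar>u\<bar> / \<bar>s\<bar>\<close>.\<close>

lemma folded_normal_mean_le_quadratic:
  assumes "s \<noteq> 0"
  shows "folded_normal_mean u s \<le> \<bar>s\<bar> * sqrt (2 / pi) + u\<^sup>2 / \<bar>s\<bar>"
proof -
  define t where "t = \<bar>u\<bar> / \<bar>s\<bar>"
  define J where "J = {-t<..<t}"
  have int_J: "integrable lborel (\<lambda>z. indicator J z * std_normal_density z)"
    unfolding J_def by (rule integrable_std_normal_interval)
  have pointwise: "max \<bar>u\<bar> \<bar>s * z\<bar> \<le> \<bar>s\<bar> * \<bar>z\<bar> + \<bar>u\<bar> * indicator J z" for z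
  proof (cases "\<bar>s * z\<bar> < \<bar>u\<bar>")
    case True
    then have "\<bar>z\<bar> < t"
      using assms by (simp add: t_def abs_mult pos_less_divide_eq mult.commute)
    then have "z \<in> J"
      by (auto simp: J_def)
    then show ?thesis
      using True by (simp add: abs_mult)
  qed (simp add: abs_mult)
  have "folded_normal_mean u s
      \<le> (LINT z|lborel. \<bar>s\<bar> * (std_normal_density z * \<bar>z\<bar>) + \<bar>u\<bar> * (indicator J z * std_normal_density z))"
    unfolding folded_normal_mean_eq_max
  proof (intro integral_mono integrable_std_normal_max)
    show "integrable lborel
        (\<lambda>z. \<bar>s\<bar> * (std_normal_density z * \<bar>z\<bar>) + \<bar>u\<bar> * (indicator J z * std_normal_density z))"
      using integrable_std_normal_abs int_J by simp
    fix z
    have "std_normal_density z * max \<bar>u\<bar> \<bar>s * z\<bar>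
        \<le> std_normal_density z * (\<bar>s\<bar> * \<bar>z\<bar> + \<bar>u\<bar> * indicator J z)"
      by (intro mult_left_mono pointwise normal_density_nonneg)
    also have "\<dots> = \<bar>s\<bar> * (std_normal_density z * \<bar>z\<bar>) + \<bar>u\<bar> * (indicator J z * std_normal_density z)"
      by (simp add: algebra_simps)
    finally show "std_normal_density z * max \<bar>u\<bar> \<bar>s * z\<bar>
        \<le> \<bar>s\<bar> * (std_normal_density z * \<bar>z\<bar>) + \<bar>u\<bar> * (indicator J z * std_normal_density z)" .
  qed
  also have "\<dots> = \<bar>s\<bar> * sqrt (2 / pi) + \<bar>u\<bar> * (LINT z|lborel. indicator J z * std_normal_density z)"
    using integrable_std_normal_abs int_J by (simp add: integral_std_normal_abs)
  also have "\<dots> \<le> \<bar>s\<bar> * sqrt (2 / pi) + \<bar>u\<bar> * t"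
    unfolding J_def by (intro add_left_mono mult_left_mono integral_std_normal_interval_le) (auto simp: t_def)
  also have "\<dots> = \<bar>s\<bar> * sqrt (2 / pi) + u\<^sup>2 / \<bar>s\<bar>"
    by (simp add: t_def power2_eq_square abs_mult_self_eq)
  finally show ?thesis .
qed

definition abs_prod_mean :: "real \<Rightarrow> real \<Rightarrow> real \<Rightarrow> real" where
  "abs_prod_mean p q s = (LINT z1|lborel. LINT z2|lborel.
     std_normal_density z1 * std_normal_density z2 * \<bar>p * z1\<bar> * \<bar>q * z1 + s * z2\<bar>)"

lemma abs_prod_mean_eq_folded:
  "abs_prod_mean p q s = (LINT z|lborel. std_normal_density z * \<bar>p * z\<bar> * folded_normal_mean (q * z) s)"
proof -
  have "(LINT z2|lborel. std_normal_density z1 * std_normal_density z2 * \<bar>p * z1\<bar> * \<bar>q * z1 + s * z2\<bar>)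
      = std_normal_density z1 * \<bar>p * z1\<bar> * folded_normal_mean (q * z1) s" for z1
    unfolding folded_normal_mean_def integral_mult_right_zero[symmetric] by (simp add: mult_ac)
  then show ?thesis
    by (simp add: abs_prod_mean_def)
qed

lemma std_normal_folded_le:
  "std_normal_density z * \<bar>p * z\<bar> * folded_normal_mean (q * z) s
     \<le> \<bar>p\<bar> * \<bar>q\<bar> * (std_normal_density z * z\<^sup>2) + \<bar>p\<bar> * \<bar>s\<bar> * sqrt (2 / pi) * (std_normal_density z * \<bar>z\<bar>)"
proof -
  have "std_normal_density z * \<bar>p * z\<bar> * folded_normal_mean (q * z) s
      \<le> std_normal_density z * \<bar>p * z\<bar> * (\<bar>q * z\<bar> + \<bar>s\<bar> * sqrt (2 / pi))"
    by (intro mult_left_mono folded_normal_mean_le mult_nonneg_nonneg normal_density_nonneg abs_ge_zero)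
  also have "\<dots> = \<bar>p\<bar> * \<bar>q\<bar> * (std_normal_density z * (\<bar>z\<bar> * \<bar>z\<bar>))
      + \<bar>p\<bar> * \<bar>s\<bar> * sqrt (2 / pi) * (std_normal_density z * \<bar>z\<bar>)"
    by (simp add: abs_mult algebra_simps)
  finally show ?thesis
    by (simp add: abs_mult_self_eq power2_eq_square)
qed

lemma integrable_std_normal_folded:
  "integrable lborel (\<lambda>z. std_normal_density z * \<bar>p * z\<bar> * folded_normal_mean (q * z) s)"
proof (rule Bochner_Integration.integrable_bound)
  show "integrable lborel (\<lambda>z. \<bar>p\<bar> * \<bar>q\<bar> * (std_normal_density z * z\<^sup>2)
      + \<bar>p\<bar> * \<bar>s\<bar> * sqrt (2 / pi) * (std_normal_density z * \<bar>z\<bar>))"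
    using integrable_std_normal_moment integrable_std_normal_abs by simp
  show "(\<lambda>z. std_normal_density z * \<bar>p * z\<bar> * folded_normal_mean (q * z) s) \<in> borel_measurable lborel"
    unfolding folded_normal_mean_def by measurable
  show "AE z in lborel. norm (std_normal_density z * \<bar>p * z\<bar> * folded_normal_mean (q * z) s)
      \<le> norm (\<bar>p\<bar> * \<bar>q\<bar> * (std_normal_density z * z\<^sup>2)
           + \<bar>p\<bar> * \<bar>s\<bar> * sqrt (2 / pi) * (std_normal_density z * \<bar>z\<bar>))"
    using std_normal_folded_le normal_density_nonneg folded_normal_mean_nonneg
    by (intro AE_I2) (simp add: abs_mult)
qed

lemma abs_abs_prod_mean_le: "\<bar>abs_prod_mean p q s\<bar> \<le> \<bar>p\<bar> * \<bar>q\<bar> + \<bar>p\<bar> * \<bar>s\<bar> * (2 / pi)"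
proof -
  have "\<bar>abs_prod_mean p q s\<bar> \<le> (LINT z|lborel. \<bar>p\<bar> * \<bar>q\<bar> * (std_normal_density z * z\<^sup>2)
      + \<bar>p\<bar> * \<bar>s\<bar> * sqrt (2 / pi) * (std_normal_density z * \<bar>z\<bar>))"
    unfolding abs_prod_mean_eq_folded
    using integrable_std_normal_moment integrable_std_normal_abs
      std_normal_folded_le normal_density_nonneg folded_normal_mean_nonneg
    by (intro integral_abs_bound_integral integrable_std_normal_folded) (auto simp: abs_mult)
  also have "\<dots> = \<bar>p\<bar> * \<bar>q\<bar> + \<bar>p\<bar> * \<bar>s\<bar> * (2 / pi)"
    using integrable_std_normal_moment integrable_std_normal_abs
    by (simp add: integral_std_normal_sq integral_std_normal_abs mult.assoc)
  finally show ?thesis .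
qed

lemma abs_prod_mean_ge:
  assumes "0 \<le> p"
  shows "p * \<bar>s\<bar> * (2 / pi) \<le> abs_prod_mean p q s"
proof -
  have "p * \<bar>s\<bar> * (2 / pi) = (LINT z|lborel. p * \<bar>s\<bar> * sqrt (2 / pi) * (std_normal_density z * \<bar>z\<bar>))"
    by (simp add: integral_std_normal_abs mult.assoc)
  also have "\<dots> \<le> abs_prod_mean p q s"
    unfolding abs_prod_mean_eq_folded
  proof (intro integral_mono integrable_std_normal_folded)
    show "integrable lborel (\<lambda>z. p * \<bar>s\<bar> * sqrt (2 / pi) * (std_normal_density z * \<bar>z\<bar>))"
      using integrable_std_normal_abs by simp
    fix z
    have "std_normal_density z * \<bar>p * z\<bar> * (\<bar>s\<bar> * sqrt (2 / pi))
        \<le> std_normal_density z * \<bar>p * z\<bar> * folded_normal_mean (q * z) s"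
      by (intro mult_left_mono folded_normal_mean_ge mult_nonneg_nonneg normal_density_nonneg abs_ge_zero)
    then show "p * \<bar>s\<bar> * sqrt (2 / pi) * (std_normal_density z * \<bar>z\<bar>)
        \<le> std_normal_density z * \<bar>p * z\<bar> * folded_normal_mean (q * z) s"
      using assms by (simp add: abs_mult mult_ac)
  qed
  finally show ?thesis .
qed

lemma abs_prod_mean_le:
  assumes "0 \<le> p" and "s \<noteq> 0"
  shows "abs_prod_mean p q s \<le> p * \<bar>s\<bar> * (2 / pi) + p * q\<^sup>2 / \<bar>s\<bar> * (2 * sqrt (2 / pi))"
proof -
  have "abs_prod_mean p q s \<le> (LINT z|lborel. p * \<bar>s\<bar> * sqrt (2 / pi) * (std_normal_density z * \<bar>z\<bar>)
      + p * q\<^sup>2 / \<bar>s\<bar> * (std_normal_density z * \<bar>z\<bar>^3))"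
    unfolding abs_prod_mean_eq_folded
  proof (intro integral_mono integrable_std_normal_folded)
    show "integrable lborel (\<lambda>z. p * \<bar>s\<bar> * sqrt (2 / pi) * (std_normal_density z * \<bar>z\<bar>)
        + p * q\<^sup>2 / \<bar>s\<bar> * (std_normal_density z * \<bar>z\<bar>^3))"
      using integrable_std_normal_moment_abs integrable_std_normal_abs by simp
    fix z
    have "std_normal_density z * \<bar>p * z\<bar> * folded_normal_mean (q * z) s
        \<le> std_normal_density z * \<bar>p * z\<bar> * (\<bar>s\<bar> * sqrt (2 / pi) + (q * z)\<^sup>2 / \<bar>s\<bar>)"
      using assms(2)
      by (intro mult_left_mono folded_normal_mean_le_quadratic mult_nonneg_nonneg normal_density_nonneg abs_ge_zero)
    also have "\<dots> = p * \<bar>s\<bar> * sqrt (2 / pi) * (std_normal_density z * \<bar>z\<bar>)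
        + p * q\<^sup>2 / \<bar>s\<bar> * (std_normal_density z * \<bar>z\<bar>^3)"
      using assms(1) by (simp add: abs_mult power2_eq_square power3_eq_cube abs_mult_self_eq field_simps)
    finally show "std_normal_density z * \<bar>p * z\<bar> * folded_normal_mean (q * z) s
        \<le> p * \<bar>s\<bar> * sqrt (2 / pi) * (std_normal_density z * \<bar>z\<bar>)
          + p * q\<^sup>2 / \<bar>s\<bar> * (std_normal_density z * \<bar>z\<bar>^3)" .
  qed
  also have "\<dots> = p * \<bar>s\<bar> * (2 / pi) + p * q\<^sup>2 / \<bar>s\<bar> * (2 * sqrt (2 / pi))"
    using integrable_std_normal_moment_abs integrable_std_normal_abs
    by (simp add: integral_std_normal_abs integral_std_normal_abs_cube mult.assoc)
  finally show ?thesis .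
qed

lemma gauss_abs_prod_exp_eq:
  "gauss_abs_prod_exp a b c = (let q = if a > 0 then b / sqrt a else 0 in abs_prod_mean (sqrt a) q (sqrt (c - q\<^sup>2)))"
  unfolding gauss_abs_prod_exp_def abs_prod_mean_def Let_def ..

lemma gauss_abs_prod_exp_det_bounds:
  assumes "0 < a" and "0 < a * c - b\<^sup>2"
  shows "sqrt (a * c - b\<^sup>2) * (2 / pi) \<le> gauss_abs_prod_exp a b c"
    and "gauss_abs_prod_exp a b c \<le> sqrt (a * c - b\<^sup>2) * (2 / pi) + b\<^sup>2 / sqrt (a * c - b\<^sup>2) * (2 * sqrt (2 / pi))"
proof -
  define q where "q = b / sqrt a"
  define s where "s = sqrt (c - q\<^sup>2)"
  have G: "gauss_abs_prod_exp a b c = abs_prod_mean (sqrt a) q s"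
    using assms(1) by (simp add: gauss_abs_prod_exp_eq q_def s_def Let_def)
  have "c - q\<^sup>2 = (a * c - b\<^sup>2) / a"
    using assms(1) by (simp add: q_def power_divide field_simps)
  then have s: "s = sqrt (a * c - b\<^sup>2) / sqrt a" "0 < s"
    using assms by (simp_all add: s_def real_sqrt_divide)
  have ps: "sqrt a * \<bar>s\<bar> = sqrt (a * c - b\<^sup>2)"
    unfolding s(1) using assms by simp
  have pqs: "sqrt a * q\<^sup>2 / \<bar>s\<bar> = b\<^sup>2 / sqrt (a * c - b\<^sup>2)"
    unfolding s(1) q_def using assms by (simp add: power_divide field_simps)
  show "sqrt (a * c - b\<^sup>2) * (2 / pi) \<le> gauss_abs_prod_exp a b c"
    using abs_prod_mean_ge[of "sqrt a" s q] assms(1) unfolding G ps by simp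
  show "gauss_abs_prod_exp a b c \<le> sqrt (a * c - b\<^sup>2) * (2 / pi) + b\<^sup>2 / sqrt (a * c - b\<^sup>2) * (2 * sqrt (2 / pi))"
    using abs_prod_mean_le[of "sqrt a" s q] s(2) assms(1) unfolding G ps pqs by simp
qed

text \<open>No positivity is assumed: the bound also covers the junk values that the Cholesky
  factorisation in \<open>gauss_abs_prod_exp\<close> produces for indefinite matrices.\<close>

lemma abs_gauss_abs_prod_exp_le:
  "\<bar>gauss_abs_prod_exp a b c\<bar> \<le> \<bar>b\<bar> + sqrt (\<bar>a\<bar> * \<bar>c\<bar> + b\<^sup>2) * (2 / pi)"
proof -
  define q where "q = (if a > 0 then b / sqrt a else 0)"
  have pq: "\<bar>sqrt a\<bar> * \<bar>q\<bar> \<le> \<bar>b\<bar>" and aq: "\<bar>a\<bar> * q\<^sup>2 \<le> b\<^sup>2"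
    by (auto simp: q_def abs_mult[symmetric] power_divide)
  have abs_sqrt: "\<bar>sqrt x\<bar> = sqrt \<bar>x\<bar>" for x :: real
    by (cases "x \<ge> 0") (auto simp: real_sqrt_minus[symmetric])
  have "\<bar>sqrt a\<bar> * \<bar>sqrt (c - q\<^sup>2)\<bar> = sqrt (\<bar>a\<bar> * \<bar>c - q\<^sup>2\<bar>)"
    by (simp only: abs_sqrt real_sqrt_mult)
  also have "\<dots> \<le> sqrt (\<bar>a\<bar> * \<bar>c\<bar> + b\<^sup>2)"
  proof (rule real_sqrt_le_mono)
    have "\<bar>a\<bar> * \<bar>c - q\<^sup>2\<bar> \<le> \<bar>a\<bar> * (\<bar>c\<bar> + q\<^sup>2)"
      using abs_triangle_ineq4[of c "q\<^sup>2"] by (intro mult_left_mono) auto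
    then show "\<bar>a\<bar> * \<bar>c - q\<^sup>2\<bar> \<le> \<bar>a\<bar> * \<bar>c\<bar> + b\<^sup>2"
      using aq by (simp add: distrib_left)
  qed
  finally have ps: "\<bar>sqrt a\<bar> * \<bar>sqrt (c - q\<^sup>2)\<bar> \<le> sqrt (\<bar>a\<bar> * \<bar>c\<bar> + b\<^sup>2)" .
  have "\<bar>gauss_abs_prod_exp a b c\<bar> \<le> \<bar>sqrt a\<bar> * \<bar>q\<bar> + \<bar>sqrt a\<bar> * \<bar>sqrt (c - q\<^sup>2)\<bar> * (2 / pi)"
    using abs_abs_prod_mean_le by (simp add: gauss_abs_prod_exp_eq q_def[symmetric] Let_def)
  also have "\<dots> \<le> \<bar>b\<bar> + sqrt (\<bar>a\<bar> * \<bar>c\<bar> + b\<^sup>2) * (2 / pi)"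
    using pq ps by (intro add_mono mult_right_mono) auto
  finally show ?thesis .
qed

lemma abs_sqrt_det_sub_le:
  fixes v a b c :: real
  assumes "0 < v" and "0 \<le> a" "a \<le> v" and "0 \<le> c" "c \<le> v" and "0 \<le> a * c - b\<^sup>2"
  shows "\<bar>sqrt (a * c - b\<^sup>2) - v\<bar> \<le> (v - a) + (v - c) + b\<^sup>2 / v"
proof -
  define D where "D = a * c - b\<^sup>2"
  have "a * c \<le> v * v"
    using assms by (intro mult_mono) auto
  then have D_le: "D \<le> v\<^sup>2"
    unfolding D_def power2_eq_square using zero_le_square[of b] by linarith
  have "v\<^sup>2 - a * c = v * (v - a) + a * (v - c)"
    by (simp add: power2_eq_square algebra_simps)
  also have "\<dots> \<le> v * (v - a) + v * (v - c)"
    using assms by (intro add_left_mono mult_right_mono) auto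
  finally have gap: "v\<^sup>2 - D \<le> v * ((v - a) + (v - c) + b\<^sup>2 / v)"
    using assms(1) by (simp add: D_def algebra_simps)
  have "sqrt D \<le> v"
    using D_le assms(1) real_sqrt_le_mono[OF D_le] by simp
  then have "\<bar>sqrt D - v\<bar> * v \<le> (v - sqrt D) * (v + sqrt D)"
    using assms(6) by (simp add: mult_left_mono D_def)
  also have "\<dots> = v\<^sup>2 - D"
    using assms(6) by (simp add: D_def power2_eq_square algebra_simps)
  finally have "\<bar>sqrt D - v\<bar> * v \<le> ((v - a) + (v - c) + b\<^sup>2 / v) * v"
    using gap by (simp add: mult.commute)
  then show ?thesis
    using assms(1) by (simp add: D_def)
qed

lemma gauss_abs_prod_exp_near_diag:
  fixes v a b c :: real
  assumes "0 < v" and "0 \<le> a" "a \<le> v" and "0 \<le> c" "c \<le> v" and det: "v\<^sup>2 / 4 \<le> a * c - b\<^sup>2"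
  shows "\<bar>gauss_abs_prod_exp a b c - v * (2 / pi)\<bar>
           \<le> ((v - a) + (v - c) + b\<^sup>2 / v) * (2 / pi) + b\<^sup>2 / v * (4 * sqrt (2 / pi))"
proof -
  define D where "D = a * c - b\<^sup>2"
  have D: "0 < D"
    using det zero_less_power[OF assms(1), of 2] unfolding D_def by linarith
  have "0 < a"
    using D assms(2) by (cases "a = 0") (auto simp: D_def)
  note G = gauss_abs_prod_exp_det_bounds[OF this D[unfolded D_def], folded D_def]
  have "sqrt (v\<^sup>2 / 4) \<le> sqrt D"
    using det by (simp add: D_def)
  then have sqrt_D: "v / 2 \<le> sqrt D"
    using assms(1) by (simp add: real_sqrt_divide)
  have "b\<^sup>2 / sqrt D \<le> b\<^sup>2 / (v / 2)"
    using sqrt_D assms(1) D by (intro divide_left_mono) auto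
  then have "b\<^sup>2 / sqrt D * (2 * sqrt (2 / pi)) \<le> b\<^sup>2 / (v / 2) * (2 * sqrt (2 / pi))"
    by (rule mult_right_mono) simp
  also have "\<dots> = b\<^sup>2 / v * (4 * sqrt (2 / pi))"
    by simp
  finally have T: "b\<^sup>2 / sqrt D * (2 * sqrt (2 / pi)) \<le> b\<^sup>2 / v * (4 * sqrt (2 / pi))" .
  have "\<bar>sqrt D * (2 / pi) - v * (2 / pi)\<bar> = \<bar>(sqrt D - v) * (2 / pi)\<bar>"
    by (simp only: left_diff_distrib)
  also have "\<dots> = \<bar>sqrt D - v\<bar> * (2 / pi)"
    by (simp only: abs_mult) simp
  also have "\<dots> \<le> ((v - a) + (v - c) + b\<^sup>2 / v) * (2 / pi)"
    using abs_sqrt_det_sub_le[OF assms(1-5)] D by (intro mult_right_mono) (simp_all add: D_def)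
  finally have R: "\<bar>sqrt D * (2 / pi) - v * (2 / pi)\<bar> \<le> ((v - a) + (v - c) + b\<^sup>2 / v) * (2 / pi)" .
  have "0 \<le> b\<^sup>2 / sqrt D * (2 * sqrt (2 / pi))"
    using D by simp
  then show ?thesis
    using G T R unfolding abs_le_iff by (elim conjE) (intro conjI; linarith)
qed

lemma det_ge_near_diag:
  fixes v a b c x y :: real
  assumes "0 < v" and "0 \<le> v - a" "v - a \<le> x" and "0 \<le> v - c" "v - c \<le> x" and "b\<^sup>2 \<le> y"
    and "2 * v * x + y \<le> 3/4 * v\<^sup>2"
  shows "v\<^sup>2 / 4 \<le> a * c - b\<^sup>2"
proof -
  have "v * ((v - a) + (v - c)) \<le> v * (2 * x)"
    using assms(1,3,5) by (intro mult_left_mono) auto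
  moreover have "0 \<le> (v - a) * (v - c)"
    using assms(2,4) by simp
  then have "v\<^sup>2 - v * ((v - a) + (v - c)) \<le> a * c"
    by (simp add: power2_eq_square algebra_simps)
  ultimately show ?thesis
    using assms(6,7) by (simp add: algebra_simps)
qed

lemma abs_div_sqrt_sub_le:
  fixes A G w \<delta> :: real
  assumes "0 < A" "A \<le> 1" and "\<bar>G - w\<bar> \<le> \<delta>" and "0 \<le> w"
  shows "\<bar>G / sqrt A - w\<bar> \<le> (w + \<delta>) * (1 / A - 1) + \<delta>"
proof -
  have "A \<le> sqrt A"
    using assms(1,2) by (simp add: real_le_rsqrt power2_eq_square mult_left_le)
  then have "1 / sqrt A \<le> 1 / A"
    using assms(1) by (intro divide_left_mono) auto
  moreover have "1 \<le> 1 / sqrt A"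
    using assms(1,2) by (simp add: le_divide_eq)
  moreover have "\<bar>G\<bar> \<le> w + \<delta>"
    using assms(3,4) by linarith
  ultimately have "\<bar>G\<bar> * (1 / sqrt A - 1) \<le> (w + \<delta>) * (1 / A - 1)"
    by (intro mult_mono) auto
  moreover have "\<bar>G / sqrt A - w\<bar> \<le> \<bar>G\<bar> * (1 / sqrt A - 1) + \<bar>G - w\<bar>"
  proof -
    have "G / sqrt A - w = G * (1 / sqrt A - 1) + (G - w)"
      by (simp add: algebra_simps)
    then have "\<bar>G / sqrt A - w\<bar> \<le> \<bar>G * (1 / sqrt A - 1)\<bar> + \<bar>G - w\<bar>"
      by (simp only: abs_triangle_ineq)
    also have "\<bar>G * (1 / sqrt A - 1)\<bar> = \<bar>G\<bar> * (1 / sqrt A - 1)"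
      using \<open>1 \<le> 1 / sqrt A\<close> by (simp add: abs_mult)
    finally show ?thesis .
  qed
  ultimately show ?thesis
    using assms(3) by linarith
qed

lemma abs_gauss_abs_prod_exp_le_bound:
  fixes a b c M :: real
  assumes "\<bar>a\<bar> \<le> M" "\<bar>b\<bar> \<le> M" "\<bar>c\<bar> \<le> M"
  shows "\<bar>gauss_abs_prod_exp a b c\<bar> \<le> 3 * M"
proof -
  have M: "0 \<le> M"
    using assms(1) by linarith
  have "\<bar>b\<bar> * \<bar>b\<bar> \<le> M * M"
    using assms(2) by (intro mult_mono) auto
  then have "b\<^sup>2 \<le> M * M"
    by (simp add: power2_eq_square abs_mult_self_eq)
  moreover have "\<bar>a\<bar> * \<bar>c\<bar> \<le> M * M"
    using assms(1,3) by (intro mult_mono) auto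
  ultimately have "\<bar>a\<bar> * \<bar>c\<bar> + b\<^sup>2 \<le> (2 * M)\<^sup>2"
    unfolding power2_eq_square using mult_nonneg_nonneg[OF M M] by linarith
  then have "sqrt (\<bar>a\<bar> * \<bar>c\<bar> + b\<^sup>2) \<le> sqrt ((2 * M)\<^sup>2)"
    by (rule real_sqrt_le_mono)
  also have "\<dots> = 2 * M"
    using M by (simp only: real_sqrt_abs abs_of_nonneg)
  finally have "sqrt (\<bar>a\<bar> * \<bar>c\<bar> + b\<^sup>2) \<le> 2 * M" .
  then have "sqrt (\<bar>a\<bar> * \<bar>c\<bar> + b\<^sup>2) * (2 / pi) \<le> 2 * M * 1"
    using M pi_gt3 by (intro mult_mono) (auto simp: divide_le_eq)
  then show ?thesis
    using abs_gauss_abs_prod_exp_le[of a b c] assms(2) by linarith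
qed


section \<open>Lattice points on a sphere\<close>

definition real_vec :: "int^'d \<Rightarrow> real^'d" where
  "real_vec \<mu> = (\<chi> i. real_of_int (\<mu> $ i))"

lemma lat_inner_eq_inner: "lat_inner \<mu> x = real_vec \<mu> \<bullet> x"
  unfolding lat_inner_def real_vec_def inner_vec_def by simp

lemma norm_real_vec:
  assumes "\<mu> \<in> lattice_pts E"
  shows "norm (real_vec \<mu>) = sqrt (real E)"
proof -
  have "real_of_int (\<Sum>i\<in>UNIV. (\<mu> $ i)\<^sup>2) = real E"
    using assms by (simp add: lattice_pts_def)
  then have "(\<Sum>i\<in>UNIV. (real_of_int (\<mu> $ i))\<^sup>2) = real E"
    by simp
  then show ?thesis
    by (simp add: norm_vec_def L2_set_def real_vec_def)
qed

lemma abs_lat_inner_le: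
  assumes "\<mu> \<in> lattice_pts E"
  shows "\<bar>lat_inner \<mu> x\<bar> \<le> sqrt (real E) * norm x"
  using Cauchy_Schwarz_ineq2[of "real_vec \<mu>" x] norm_real_vec[OF assms]
  by (simp add: lat_inner_eq_inner)

lemma finite_lattice_pts: "finite (lattice_pts E :: (int^'d) set)"
proof (rule finite_subset)
  let ?A = "{- int E..int E}"
  show "lattice_pts E \<subseteq> vec_lambda ` (\<Pi>\<^sub>E i\<in>(UNIV::'d set). ?A)"
  proof
    fix \<mu> :: "int^'d"
    assume "\<mu> \<in> lattice_pts E"
    then have sum_sq: "(\<Sum>i\<in>UNIV. (\<mu> $ i)\<^sup>2) = int E"
      by (simp add: lattice_pts_def)
    have "\<mu> $ i \<in> ?A" for i
    proof -
      have "\<bar>\<mu> $ i\<bar> \<le> (\<mu> $ i)\<^sup>2"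
      proof (cases "\<mu> $ i = 0")
        case False
        then have "\<bar>\<mu> $ i\<bar> * 1 \<le> \<bar>\<mu> $ i\<bar> * \<bar>\<mu> $ i\<bar>"
          by (intro mult_left_mono) auto
        then show ?thesis
          by (simp add: power2_eq_square abs_mult_self_eq)
      qed simp
      also have "\<dots> \<le> (\<Sum>i\<in>UNIV. (\<mu> $ i)\<^sup>2)"
        by (rule member_le_sum) auto
      finally show ?thesis
        using sum_sq by auto
    qed
    then have "vec_nth \<mu> \<in> (\<Pi>\<^sub>E i\<in>UNIV. ?A)"
      by auto
    then show "\<mu> \<in> vec_lambda ` (\<Pi>\<^sub>E i\<in>UNIV. ?A)"
      by (metis image_eqI vec_nth_inverse)
  qed
  show "finite (vec_lambda ` (\<Pi>\<^sub>E i\<in>(UNIV::'d set). ?A))"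
    by (intro finite_imageI finite_PiE) auto
qed

lemma sum_lattice_pts_involution:
  assumes sq: "\<And>\<mu>. (\<Sum>i\<in>UNIV. (h \<mu> $ i)\<^sup>2) = (\<Sum>i\<in>UNIV. (\<mu> $ i)\<^sup>2)"
    and inv: "\<And>\<mu>. h (h \<mu>) = \<mu>"
  shows "(\<Sum>\<mu>\<in>lattice_pts E. f (h \<mu>)) = (\<Sum>\<mu>\<in>(lattice_pts E :: (int^'d) set). f \<mu>)"
  by (rule sum.reindex_bij_witness[where i=h and j=h]) (auto simp: lattice_pts_def sq inv)

lemma sum_lattice_pts_coord_mult:
  fixes i j :: "'d::finite"
  assumes "i \<noteq> j"
  shows "(\<Sum>\<mu>\<in>(lattice_pts E :: (int^'d) set). real_of_int (\<mu> $ i) * real_of_int (\<mu> $ j)) = 0"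
proof -
  let ?f = "\<lambda>\<mu>::int^'d. real_of_int (\<mu> $ i) * real_of_int (\<mu> $ j)"
  define h :: "int^'d \<Rightarrow> int^'d" where "h \<mu> = (\<chi> k. if k = i then - \<mu> $ k else \<mu> $ k)" for \<mu>
  have "(\<Sum>\<mu>\<in>lattice_pts E. ?f \<mu>) = (\<Sum>\<mu>\<in>lattice_pts E. ?f (h \<mu>))"
    by (rule sum_lattice_pts_involution[symmetric]) (auto simp: h_def vec_eq_iff intro!: sum.cong)
  also have "\<dots> = - (\<Sum>\<mu>\<in>lattice_pts E. ?f \<mu>)"
    using assms by (simp add: h_def sum_negf)
  finally show ?thesis
    by simp
qed

lemma sum_lattice_pts_coord_sq:
  fixes i :: "'d::finite"
  shows "(\<Sum>\<mu>\<in>(lattice_pts E :: (int^'d) set). (real_of_int (\<mu> $ i))\<^sup>2)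
           = real (card (lattice_pts E :: (int^'d) set)) * real E / real CARD('d)"
proof -
  let ?P = "lattice_pts E :: (int^'d) set"
  let ?c = "\<lambda>j. \<Sum>\<mu>\<in>?P. (real_of_int (\<mu> $ j))\<^sup>2"
  have indep: "?c j = ?c i" for j
  proof -
    define h :: "int^'d \<Rightarrow> int^'d" where "h \<mu> = (\<chi> k. \<mu> $ Transposition.transpose i j k)" for \<mu>
    have "(\<Sum>k\<in>UNIV. (\<mu> $ Transposition.transpose i j k)\<^sup>2) = (\<Sum>k\<in>UNIV. (\<mu> $ k)\<^sup>2)" for \<mu> :: "int^'d"
      by (rule sum.reindex_bij_witness[where i="Transposition.transpose i j" and j="Transposition.transpose i j"])
         auto
    then have "?c j = (\<Sum>\<mu>\<in>?P. (\<lambda>\<mu>. (real_of_int (\<mu> $ j))\<^sup>2) (h \<mu>))"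
      by (intro sum_lattice_pts_involution[symmetric]) (auto simp: h_def vec_eq_iff)
    also have "\<dots> = ?c i"
      by (simp add: h_def)
    finally show ?thesis .
  qed
  have "(\<Sum>j\<in>UNIV. ?c j) = (\<Sum>j\<in>(UNIV :: 'd set). ?c i)"
    by (rule sum.cong[OF refl]) (rule indep)
  then have "real CARD('d) * ?c i = (\<Sum>j\<in>UNIV. ?c j)"
    by simp
  also have "\<dots> = (\<Sum>\<mu>\<in>?P. \<Sum>j\<in>UNIV. (real_of_int (\<mu> $ j))\<^sup>2)"
    by (rule sum.swap)
  also have "\<dots> = (\<Sum>\<mu>\<in>?P. real E)"
  proof (rule sum.cong[OF refl])
    fix \<mu> assume "\<mu> \<in> ?P"
    then have "real_of_int (\<Sum>j\<in>UNIV. (\<mu> $ j)\<^sup>2) = real E"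
      by (simp add: lattice_pts_def)
    then show "(\<Sum>j\<in>UNIV. (real_of_int (\<mu> $ j))\<^sup>2) = real E"
      by simp
  qed
  finally show ?thesis
    by (simp add: field_simps)
qed

lemma sum_lattice_pts_inner_sq:
  "(\<Sum>\<mu>\<in>(lattice_pts E :: (int^'d) set). (real_vec \<mu> \<bullet> w)\<^sup>2)
     = real (card (lattice_pts E :: (int^'d) set)) * real E / real CARD('d) * (w \<bullet> w)"
proof -
  let ?P = "lattice_pts E :: (int^'d) set"
  let ?c = "real (card ?P) * real E / real CARD('d)"
  have "(\<Sum>\<mu>\<in>?P. (real_vec \<mu> \<bullet> w)\<^sup>2)
      = (\<Sum>\<mu>\<in>?P. \<Sum>i\<in>UNIV. \<Sum>j\<in>UNIV. (w $ i * w $ j) * (real_of_int (\<mu> $ i) * real_of_int (\<mu> $ j)))"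
    by (simp add: real_vec_def inner_vec_def power2_eq_square sum_product mult_ac)
  also have "\<dots> = (\<Sum>i\<in>UNIV. \<Sum>j\<in>UNIV. (w $ i * w $ j) * (\<Sum>\<mu>\<in>?P. real_of_int (\<mu> $ i) * real_of_int (\<mu> $ j)))"
    by (simp add: sum.swap[of _ ?P] sum_distrib_left)
  also have "\<dots> = (\<Sum>i\<in>UNIV. \<Sum>j\<in>UNIV. if j = i then (w $ i * w $ i) * ?c else 0)"
  proof (intro sum.cong refl)
    fix i j :: 'd
    show "(w $ i * w $ j) * (\<Sum>\<mu>\<in>?P. real_of_int (\<mu> $ i) * real_of_int (\<mu> $ j))
        = (if j = i then (w $ i * w $ i) * ?c else 0)"
      using sum_lattice_pts_coord_sq[where E=E and i=i] sum_lattice_pts_coord_mult[where E=E and i=i and j=j]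
      by (cases "j = i") (simp_all add: power2_eq_square)
  qed
  also have "\<dots> = (\<Sum>i\<in>UNIV. ?c * (w $ i * w $ i))"
    by (simp add: mult.commute)
  also have "\<dots> = ?c * (w \<bullet> w)"
    by (simp add: inner_vec_def sum_distrib_left)
  finally show ?thesis .
qed

section \<open>The covariance function\<close>

lemma cov_r_sym:
  fixes \<gamma> :: "real \<Rightarrow> real^'d"
  shows "cov_r \<gamma> E t s = cov_r \<gamma> E s t"
proof -
  have "lat_inner \<mu> (\<gamma> t - \<gamma> s) = - lat_inner \<mu> (\<gamma> s - \<gamma> t)" for \<mu> :: "int^'d"
    by (simp add: lat_inner_eq_inner inner_diff_right)
  then show ?thesis
    by (simp add: cov_r_def)
qed

lemma cov_r_diag:
  assumes "(lattice_pts E :: (int^'d) set) \<noteq> {}"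
  shows "cov_r (\<gamma> :: real \<Rightarrow> real^'d) E t t = 1"
  using assms finite_lattice_pts[where E=E] by (simp add: cov_r_def lat_inner_def card_gt_0_iff)

lemma cov_r2_eq_cov_r1: "cov_r2 \<gamma> E s t = cov_r1 \<gamma> E t s"
  unfolding cov_r1_def cov_r2_def by (subst cov_r_sym) (rule refl)

lemma lat_inner_zero [simp]: "lat_inner \<mu> 0 = 0"
  by (simp add: lat_inner_def)

lemma has_real_derivative_lat_inner:
  assumes "(\<gamma> has_vector_derivative v) (at t)"
  shows "((\<lambda>s. lat_inner \<mu> (\<gamma> s)) has_real_derivative lat_inner \<mu> v) (at t)"
proof -
  have "((\<lambda>s. real_vec \<mu> \<bullet> \<gamma> s) has_derivative (\<lambda>x. real_vec \<mu> \<bullet> (x *\<^sub>R v))) (at t)"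
    using assms unfolding has_vector_derivative_def by (rule has_derivative_inner_right)
  then show ?thesis
    by (simp add: lat_inner_eq_inner has_real_derivative_iff_has_vector_derivative has_vector_derivative_def)
qed

definition cov_r1_sum :: "(real \<Rightarrow> real^'d) \<Rightarrow> (real \<Rightarrow> real^'d) \<Rightarrow> nat \<Rightarrow> real \<Rightarrow> real \<Rightarrow> real" where
  "cov_r1_sum \<gamma> g E s t = 1 / real (card (lattice_pts E :: (int^'d) set)) *
     (\<Sum>\<mu>\<in>(lattice_pts E :: (int^'d) set).
        - sin (2 * pi * lat_inner \<mu> (\<gamma> s - \<gamma> t)) * (2 * pi * lat_inner \<mu> (g s)))"

definition cov_r12_sum :: "(real \<Rightarrow> real^'d) \<Rightarrow> (real \<Rightarrow> real^'d) \<Rightarrow> nat \<Rightarrow> real \<Rightarrow> real \<Rightarrow> real" where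
  "cov_r12_sum \<gamma> g E s t = 1 / real (card (lattice_pts E :: (int^'d) set)) *
     (\<Sum>\<mu>\<in>(lattice_pts E :: (int^'d) set).
        cos (2 * pi * lat_inner \<mu> (\<gamma> s - \<gamma> t)) * (2 * pi * lat_inner \<mu> (g s)) * (2 * pi * lat_inner \<mu> (g t)))"

lemma has_real_derivative_phase_fst:
  fixes \<gamma> :: "real \<Rightarrow> real^'d"
  assumes "(\<gamma> has_vector_derivative v) (at s)"
  shows "((\<lambda>s. 2 * pi * lat_inner \<mu> (\<gamma> s - \<gamma> t)) has_real_derivative 2 * pi * lat_inner \<mu> v) (at s)"
  using has_real_derivative_lat_inner[OF assms, of \<mu>]
  by (auto simp: lat_inner_eq_inner inner_diff_right intro!: derivative_eq_intros)

lemma has_real_derivative_phase_snd: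
  fixes \<gamma> :: "real \<Rightarrow> real^'d"
  assumes "(\<gamma> has_vector_derivative v) (at t)"
  shows "((\<lambda>t. 2 * pi * lat_inner \<mu> (\<gamma> s - \<gamma> t)) has_real_derivative - (2 * pi * lat_inner \<mu> v)) (at t)"
  using has_real_derivative_lat_inner[OF assms, of \<mu>]
  by (auto simp: lat_inner_eq_inner inner_diff_right intro!: derivative_eq_intros)

lemma has_real_derivative_cov_r:
  fixes \<gamma> :: "real \<Rightarrow> real^'d"
  assumes "(\<gamma> has_vector_derivative g s) (at s)"
  shows "((\<lambda>s. cov_r \<gamma> E s t) has_real_derivative cov_r1_sum \<gamma> g E s t) (at s)"
  unfolding cov_r_def cov_r1_sum_def
  by (intro DERIV_cmult DERIV_sum DERIV_cos[THEN DERIV_chain2] has_real_derivative_phase_fst assms)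

lemma has_real_derivative_cov_r1_sum:
  fixes \<gamma> :: "real \<Rightarrow> real^'d"
  assumes "(\<gamma> has_vector_derivative g t) (at t)"
  shows "((\<lambda>t. cov_r1_sum \<gamma> g E s t) has_real_derivative cov_r12_sum \<gamma> g E s t) (at t)"
proof -
  have "((\<lambda>t. cov_r1_sum \<gamma> g E s t) has_real_derivative
      1 / real (card (lattice_pts E :: (int^'d) set)) * (\<Sum>\<mu>\<in>(lattice_pts E :: (int^'d) set).
        - (cos (2 * pi * lat_inner \<mu> (\<gamma> s - \<gamma> t)) * - (2 * pi * lat_inner \<mu> (g t))) * (2 * pi * lat_inner \<mu> (g s)))) (at t)"
    unfolding cov_r1_sum_def
    by (intro DERIV_cmult DERIV_sum DERIV_cmult_right DERIV_minus DERIV_sin[THEN DERIV_chain2]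
          has_real_derivative_phase_snd assms)
  then show ?thesis
    by (simp add: cov_r12_sum_def mult_ac)
qed

lemma cov_r1_eq_sum:
  fixes \<gamma> :: "real \<Rightarrow> real^'d"
  assumes "(\<gamma> has_vector_derivative g s) (at s)"
  shows "cov_r1 \<gamma> E s t = cov_r1_sum \<gamma> g E s t"
  unfolding cov_r1_def by (rule DERIV_imp_deriv[OF has_real_derivative_cov_r[where g=g, OF assms]])

lemma cov_r12_eq_sum:
  fixes \<gamma> :: "real \<Rightarrow> real^'d"
  assumes "(\<gamma> has_vector_derivative g s) (at s)" and "(\<gamma> has_vector_derivative g t) (at t)"
  shows "cov_r12 \<gamma> E s t = cov_r12_sum \<gamma> g E t s"
proof -
  have "(\<lambda>s'. cov_r2 \<gamma> E s' t) = (\<lambda>s'. cov_r1_sum \<gamma> g E t s')"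
    using cov_r1_eq_sum[where g=g, OF assms(2)] by (simp add: cov_r2_eq_cov_r1)
  then show ?thesis
    unfolding cov_r12_def using DERIV_imp_deriv[OF has_real_derivative_cov_r1_sum[where g=g, OF assms(1)]] by simp
qed

lemma abs_average_le:
  fixes f :: "'a \<Rightarrow> real"
  assumes "finite A" and "A \<noteq> {}" and "\<And>x. x \<in> A \<Longrightarrow> \<bar>f x\<bar> \<le> B"
  shows "\<bar>1 / real (card A) * (\<Sum>x\<in>A. f x)\<bar> \<le> B"
proof -
  have "\<bar>\<Sum>x\<in>A. f x\<bar> \<le> (\<Sum>x\<in>A. \<bar>f x\<bar>)"
    by (rule sum_abs)
  also have "\<dots> \<le> (\<Sum>x\<in>A. B)"
    using assms(3) by (rule sum_mono)
  finally have "\<bar>\<Sum>x\<in>A. f x\<bar> \<le> real (card A) * B"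
    by simp
  then show ?thesis
    using assms(1,2) by (simp add: abs_mult field_simps card_gt_0_iff)
qed

context
  fixes \<gamma> g :: "real \<Rightarrow> real^'d" and E :: nat
  assumes nonempty: "(lattice_pts E :: (int^'d) set) \<noteq> {}"
begin

lemma abs_cov_r1_sum_le:
  assumes "norm (g s) = 1"
  shows "\<bar>cov_r1_sum \<gamma> g E s t\<bar> \<le> 2 * pi * sqrt (real E)"
  unfolding cov_r1_sum_def
proof (rule abs_average_le[OF finite_lattice_pts nonempty])
  fix \<mu> :: "int^'d"
  assume "\<mu> \<in> lattice_pts E"
  then have "\<bar>sin (2 * pi * lat_inner \<mu> (\<gamma> s - \<gamma> t))\<bar> * (2 * pi * \<bar>lat_inner \<mu> (g s)\<bar>)
      \<le> 1 * (2 * pi * sqrt (real E))"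
    using abs_lat_inner_le[of \<mu> E "g s"] assms by (intro mult_mono) auto
  then show "\<bar>- sin (2 * pi * lat_inner \<mu> (\<gamma> s - \<gamma> t)) * (2 * pi * lat_inner \<mu> (g s))\<bar>
      \<le> 2 * pi * sqrt (real E)"
    by (simp add: abs_mult)
qed

lemma abs_cov_r12_sum_le:
  assumes "norm (g s) = 1" and "norm (g t) = 1"
  shows "\<bar>cov_r12_sum \<gamma> g E s t\<bar> \<le> 4 * pi\<^sup>2 * real E"
  unfolding cov_r12_sum_def
proof (rule abs_average_le[OF finite_lattice_pts nonempty])
  fix \<mu> :: "int^'d"
  assume "\<mu> \<in> lattice_pts E"
  then have "\<bar>cos (2 * pi * lat_inner \<mu> (\<gamma> s - \<gamma> t))\<bar> * (2 * pi * \<bar>lat_inner \<mu> (g s)\<bar>) * (2 * pi * \<bar>lat_inner \<mu> (g t)\<bar>)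
      \<le> 1 * (2 * pi * sqrt (real E)) * (2 * pi * sqrt (real E))"
    using abs_lat_inner_le[of \<mu> E "g s"] abs_lat_inner_le[of \<mu> E "g t"] assms
    by (intro mult_mono) auto
  then show "\<bar>cos (2 * pi * lat_inner \<mu> (\<gamma> s - \<gamma> t)) * (2 * pi * lat_inner \<mu> (g s)) * (2 * pi * lat_inner \<mu> (g t))\<bar>
      \<le> 4 * pi\<^sup>2 * real E"
    by (simp add: abs_mult power2_eq_square)
qed

lemma cov_r1_sum_diag: "cov_r1_sum \<gamma> g E t t = 0"
  by (simp add: cov_r1_sum_def)

lemma cov_r12_sum_diag:
  assumes "norm (g t) = 1"
  shows "cov_r12_sum \<gamma> g E t t = 4 * pi\<^sup>2 * real E / real CARD('d)"
proof -
  have card: "0 < real (card (lattice_pts E :: (int^'d) set))"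
    using nonempty finite_lattice_pts by (simp add: card_gt_0_iff)
  have "g t \<bullet> g t = 1"
    using assms by (simp add: power2_norm_eq_inner[symmetric])
  then have sum_sq: "(\<Sum>\<mu>\<in>(lattice_pts E :: (int^'d) set). (lat_inner \<mu> (g t))\<^sup>2)
      = real (card (lattice_pts E :: (int^'d) set)) * real E / real CARD('d)"
    by (simp add: lat_inner_eq_inner sum_lattice_pts_inner_sq)
  have "cov_r12_sum \<gamma> g E t t
      = 4 * pi\<^sup>2 / real (card (lattice_pts E :: (int^'d) set))
        * (\<Sum>\<mu>\<in>(lattice_pts E :: (int^'d) set). (lat_inner \<mu> (g t))\<^sup>2)"
    by (simp add: cov_r12_sum_def sum_distrib_left sum_divide_distrib power2_eq_square mult_ac)
  then show ?thesis
    using card by (simp add: sum_sq)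
qed

end

section \<open>The densities at a pair of points\<close>

lemma schur_complement_2x2:
  fixes Syy Sxy Sxx :: "real^2^2"
  assumes Syy: "Syy$1$1 = 1" "Syy$1$2 = \<rho>" "Syy$2$1 = \<rho>" "Syy$2$2 = 1" and "\<rho>\<^sup>2 \<noteq> 1"
    and Sxy: "Sxy$1$1 = 0" "Sxy$1$2 = \<alpha>" "Sxy$2$1 = \<beta>" "Sxy$2$2 = 0"
  shows "(Sxx - Sxy ** matrix_inv Syy ** transpose Sxy)$1$1 = Sxx$1$1 - \<alpha>\<^sup>2 / (1 - \<rho>\<^sup>2)"
    and "(Sxx - Sxy ** matrix_inv Syy ** transpose Sxy)$1$2 = Sxx$1$2 + \<rho> * \<alpha> * \<beta> / (1 - \<rho>\<^sup>2)"
    and "(Sxx - Sxy ** matrix_inv Syy ** transpose Sxy)$2$2 = Sxx$2$2 - \<beta>\<^sup>2 / (1 - \<rho>\<^sup>2)"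
proof -
  define D where "D = 1 - \<rho>\<^sup>2"
  have D: "D \<noteq> 0"
    using assms(5) by (simp add: D_def)
  define B :: "real^2^2" where "B = (\<chi> i j. (if i = j then 1 else - \<rho>) / D)"
  have B: "B$1$1 = 1 / D" "B$1$2 = - \<rho> / D" "B$2$1 = - \<rho> / D" "B$2$2 = 1 / D"
    by (simp_all add: B_def)
  have mult: "(X ** Y)$i$j = X$i$1 * Y$1$j + X$i$2 * Y$2$j" for X Y :: "real^2^2" and i j
    by (simp add: matrix_matrix_mult_def sum_2)
  have right: "Syy ** B = mat 1" and left: "B ** Syy = mat 1"
    unfolding vec_eq_iff forall_2 using D
    by (simp_all add: mult Syy B mat_def D_def field_simps power2_eq_square)
  have inv: "matrix_inv Syy = B"
    unfolding matrix_inv_def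
  proof (rule some_equality)
    fix A
    assume "Syy ** A = mat 1 \<and> A ** Syy = mat 1"
    then show "A = B"
      using right by (metis matrix_mul_assoc matrix_mul_lid matrix_mul_rid)
  qed (use right left in simp)
  have tr: "transpose Sxy $ i $ j = Sxy $ j $ i" for i j
    by (simp add: transpose_def)
  show "(Sxx - Sxy ** matrix_inv Syy ** transpose Sxy)$1$1 = Sxx$1$1 - \<alpha>\<^sup>2 / (1 - \<rho>\<^sup>2)"
    and "(Sxx - Sxy ** matrix_inv Syy ** transpose Sxy)$1$2 = Sxx$1$2 + \<rho> * \<alpha> * \<beta> / (1 - \<rho>\<^sup>2)"
    and "(Sxx - Sxy ** matrix_inv Syy ** transpose Sxy)$2$2 = Sxx$2$2 - \<beta>\<^sup>2 / (1 - \<rho>\<^sup>2)"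
    unfolding inv using D by (simp_all add: mult tr Sxy B D_def field_simps power2_eq_square)
qed

text \<open>The value of \<open>K2\<close> in terms of \<open>\<rho> = r\<close>, \<open>\<alpha> = r\<^sub>1\<close>, \<open>\<beta> = r\<^sub>2\<close>, \<open>\<kappa> = r\<^sub>1\<^sub>2\<close> at \<open>(t\<^sub>1, t\<^sub>2)\<close>,
  when \<open>r = 1\<close>, \<open>r\<^sub>1 = 0\<close> and \<open>r\<^sub>1\<^sub>2 = v\<close> on the diagonal.\<close>

definition K2_of_cov :: "real \<Rightarrow> real \<Rightarrow> real \<Rightarrow> real \<Rightarrow> real \<Rightarrow> real" where
  "K2_of_cov v \<rho> \<alpha> \<beta> \<kappa> =
     gauss_abs_prod_exp (v - \<alpha>\<^sup>2 / (1 - \<rho>\<^sup>2)) (\<kappa> + \<rho> * \<alpha> * \<beta> / (1 - \<rho>\<^sup>2)) (v - \<beta>\<^sup>2 / (1 - \<rho>\<^sup>2))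
       / (2 * pi * sqrt (1 - \<rho>\<^sup>2))"

context
  fixes \<gamma> g :: "real \<Rightarrow> real^'d" and E :: nat
  assumes nonempty: "(lattice_pts E :: (int^'d) set) \<noteq> {}"
begin

lemma cov_diag:
  assumes "(\<gamma> has_vector_derivative g t) (at t)" and "norm (g t) = 1"
  shows "cov_r \<gamma> E t t = 1" and "cov_r1 \<gamma> E t t = 0"
    and "cov_r12 \<gamma> E t t = 4 * pi\<^sup>2 * real E / real CARD('d)"
  using cov_r_diag[OF nonempty] cov_r1_eq_sum[where g=g, OF assms(1)] cov_r1_sum_diag[where \<gamma>=\<gamma> and g=g, OF nonempty]
    cov_r12_eq_sum[where g=g, OF assms(1,1)] cov_r12_sum_diag[where \<gamma>=\<gamma> and g=g, OF nonempty assms(2)]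
  by simp_all

lemma K1_eq:
  assumes "(\<gamma> has_vector_derivative g t) (at t)" and "norm (g t) = 1"
  shows "K1 \<gamma> E t = 2 * sqrt (real E / real CARD('d))"
proof -
  have "sqrt (4 * pi\<^sup>2 * real E / real CARD('d)) = 2 * pi * sqrt (real E / real CARD('d))"
    by (simp add: real_sqrt_mult real_sqrt_divide)
  moreover have "sqrt (2 / pi) / sqrt (2 * pi) = 1 / pi"
  proof -
    have "(2 / pi) / (2 * pi) = (1 / pi)\<^sup>2"
      by (simp add: power2_eq_square)
    then show ?thesis
      by (simp only: real_sqrt_divide[symmetric]) simp
  qed
  ultimately show ?thesis
    by (simp add: K1_def gauss_abs_exp_eq cov_diag[OF assms] field_simps)
qed

lemma K2_eq_K2_of_cov:
  assumes "(\<gamma> has_vector_derivative g t1) (at t1)" and "norm (g t1) = 1"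
    and "(\<gamma> has_vector_derivative g t2) (at t2)" and "norm (g t2) = 1"
    and "(cov_r \<gamma> E t1 t2)\<^sup>2 \<noteq> 1"
  shows "K2 \<gamma> E t1 t2 = K2_of_cov (4 * pi\<^sup>2 * real E / real CARD('d))
           (cov_r \<gamma> E t1 t2) (cov_r1 \<gamma> E t1 t2) (cov_r2 \<gamma> E t1 t2) (cov_r12 \<gamma> E t1 t2)"
proof -
  define tt where "tt = (\<lambda>i::2. if i = 1 then t1 else t2)"
  let ?Syy = "(\<chi> i j. cov_r \<gamma> E (tt i) (tt j)) :: real^2^2"
  let ?Sxy = "(\<chi> i j. cov_r1 \<gamma> E (tt i) (tt j)) :: real^2^2"
  let ?Sxx = "(\<chi> i j. cov_r12 \<gamma> E (tt i) (tt j)) :: real^2^2"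
  have tt: "tt 1 = t1" "tt 2 = t2"
    by (simp_all add: tt_def)
  have cc: "cond_cov \<gamma> E t1 t2 = ?Sxx - ?Sxy ** matrix_inv ?Syy ** transpose ?Sxy"
    unfolding cond_cov_def tt_def Let_def ..
  have Syy: "?Syy$1$1 = 1" "?Syy$1$2 = cov_r \<gamma> E t1 t2" "?Syy$2$1 = cov_r \<gamma> E t1 t2" "?Syy$2$2 = 1"
    using cov_diag(1)[OF assms(1,2)] cov_diag(1)[OF assms(3,4)] cov_r_sym[of \<gamma> E t2 t1]
    by (simp_all add: tt)
  have Sxy: "?Sxy$1$1 = 0" "?Sxy$1$2 = cov_r1 \<gamma> E t1 t2" "?Sxy$2$1 = cov_r2 \<gamma> E t1 t2" "?Sxy$2$2 = 0"
    using cov_diag(2)[OF assms(1,2)] cov_diag(2)[OF assms(3,4)] by (simp_all add: tt cov_r2_eq_cov_r1)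
  have Sxx: "?Sxx$1$1 = 4 * pi\<^sup>2 * real E / real CARD('d)" "?Sxx$1$2 = cov_r12 \<gamma> E t1 t2"
    "?Sxx$2$2 = 4 * pi\<^sup>2 * real E / real CARD('d)"
    using cov_diag(3)[OF assms(1,2)] cov_diag(3)[OF assms(3,4)] by (simp_all add: tt)
  note schur = schur_complement_2x2[OF Syy assms(5) Sxy, of ?Sxx, folded cc, unfolded Sxx]
  show ?thesis
    unfolding K2_def K2_of_cov_def Let_def schur by simp
qed

end

lemma mem_subinterval:
  fixes \<delta> t :: real and k :: nat
  assumes "0 < \<delta>" and "1 \<le> k" and "0 \<le> t" and "t \<le> real k * \<delta>"
  obtains i where "i \<in> {1..k}" and "t \<in> {(real i - 1) * \<delta> .. real i * \<delta>}"
proof -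
  define i where "i = max 1 (nat \<lceil>t / \<delta>\<rceil>)"
  have "t / \<delta> \<le> real k"
    using assms by (simp add: field_simps)
  then have "i \<in> {1..k}"
    using assms(2) by (auto simp: i_def nat_le_iff ceiling_le_iff)
  moreover have "t \<in> {(real i - 1) * \<delta> .. real i * \<delta>}"
  proof (cases "t = 0")
    case False
    then have "0 < t / \<delta>"
      using assms by simp
    then have "0 < \<lceil>t / \<delta>\<rceil>"
      by simp
    then have "real i = of_int \<lceil>t / \<delta>\<rceil>"
      by (simp add: i_def max_absorb2 le_nat_iff)
    moreover have "of_int \<lceil>t / \<delta>\<rceil> - 1 < t / \<delta>"
      by linarith
    then have "(of_int \<lceil>t / \<delta>\<rceil> - 1) * \<delta> < t"
      using assms(1) by (simp add: pos_less_divide_eq)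
    moreover have "t \<le> of_int \<lceil>t / \<delta>\<rceil> * \<delta>"
      using mult_right_mono[OF le_of_int_ceiling[of "t / \<delta>"], of \<delta>] assms(1) by simp
    ultimately show ?thesis
      by simp
  qed (use assms in \<open>simp add: i_def\<close>)
  ultimately show ?thesis
    using that by blast
qed

lemma abs_cov_r_le_half_outside_sing_set:
  fixes \<gamma> :: "real \<Rightarrow> real^'d"
  assumes "0 < L" and "t1 \<in> {0..L}" and "t2 \<in> {0..L}" and "(t1, t2) \<notin> sing_set \<gamma> L E c0"
  shows "\<bar>cov_r \<gamma> E t1 t2\<bar> \<le> 1/2"
proof (rule ccontr)
  assume big: "\<not> \<bar>cov_r \<gamma> E t1 t2\<bar> \<le> 1/2"
  define k where "k = nat \<lfloor>L * sqrt (real E) / c0\<rfloor> + 1"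
  define \<delta> where "\<delta> = L / real k"
  define I where "I = (\<lambda>i::nat. {(real i - 1) * \<delta> .. real i * \<delta>})"
  have k: "1 \<le> k" and \<delta>: "0 < \<delta>" and L: "L = real k * \<delta>"
    using assms(1) by (simp_all add: k_def \<delta>_def)
  have t1: "0 \<le> t1" "t1 \<le> real k * \<delta>" and t2: "0 \<le> t2" "t2 \<le> real k * \<delta>"
    using assms(2,3) L by auto
  obtain i where i: "i \<in> {1..k}" "t1 \<in> I i"
    unfolding I_def by (rule mem_subinterval[OF \<delta> k t1])
  obtain j where j: "j \<in> {1..k}" "t2 \<in> I j"
    unfolding I_def by (rule mem_subinterval[OF \<delta> k t2])
  have "\<exists>s1\<in>I i. \<exists>s2\<in>I j. \<bar>cov_r \<gamma> E s1 s2\<bar> > 1/2"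
    using i(2) j(2) big by (intro bexI[of _ t1] bexI[of _ t2]) auto
  then have "I i \<times> I j \<in> {I i \<times> I j | i j. i \<in> {1..k} \<and> j \<in> {1..k} \<and>
                 (\<exists>s1\<in>I i. \<exists>s2\<in>I j. \<bar>cov_r \<gamma> E s1 s2\<bar> > 1/2)}"
    using i(1) j(1) by blast
  moreover have "(t1, t2) \<in> I i \<times> I j"
    using i(2) j(2) by simp
  ultimately have "(t1, t2) \<in> sing_set \<gamma> L E c0"
    unfolding sing_set_def Let_def k_def[symmetric] \<delta>_def[symmetric] I_def by (rule UnionI)
  then show False
    using assms(4) by contradiction
qed

section \<open>The regression estimate\<close>

lemma one_minus_square_ge:
  fixes \<rho> :: real
  assumes "\<bar>\<rho>\<bar> \<le> 1/2"
  shows "3/4 \<le> 1 - \<rho>\<^sup>2"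
proof -
  have "\<bar>\<rho>\<bar> * \<bar>\<rho>\<bar> \<le> 1/2 * (1/2)"
    using assms by (intro mult_mono) auto
  then show ?thesis
    by (simp add: power2_eq_square abs_mult_self_eq)
qed

lemma regression_terms_le:
  fixes e \<rho> \<alpha> \<beta> \<kappa> :: real
  defines "Q \<equiv> \<rho>\<^sup>2 + \<alpha>\<^sup>2 / e + \<beta>\<^sup>2 / e + \<kappa>\<^sup>2 / e\<^sup>2"
  assumes "0 < e" and "\<bar>\<rho>\<bar> \<le> 1/2" and "Q \<le> 1"
  shows "\<rho>\<^sup>2 / (1 - \<rho>\<^sup>2) \<le> 4/3 * Q"
    and "\<alpha>\<^sup>2 / (1 - \<rho>\<^sup>2) \<le> 4/3 * (e * Q)"
    and "\<beta>\<^sup>2 / (1 - \<rho>\<^sup>2) \<le> 4/3 * (e * Q)"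
    and "(\<kappa> + \<rho> * \<alpha> * \<beta> / (1 - \<rho>\<^sup>2))\<^sup>2 \<le> 6 * (e\<^sup>2 * Q)"
proof -
  have A: "3/4 \<le> 1 - \<rho>\<^sup>2"
    using assms(3) by (rule one_minus_square_ge)
  have Q0: "0 \<le> Q"
    using assms(2) by (simp add: Q_def)
  have Q: "\<rho>\<^sup>2 \<le> Q" "\<alpha>\<^sup>2 \<le> e * Q" "\<beta>\<^sup>2 \<le> e * Q" "\<kappa>\<^sup>2 \<le> e\<^sup>2 * Q"
    using assms(2) by (simp_all add: Q_def field_simps add_increasing add_increasing2 add_nonneg_nonneg)
  have div_A: "x / (1 - \<rho>\<^sup>2) \<le> 4/3 * y" if "x \<le> y" "0 \<le> x" for x y
  proof -
    have "x / (1 - \<rho>\<^sup>2) \<le> x / (3/4)"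
      using that A by (intro divide_left_mono) auto
    then show ?thesis
      using that by simp
  qed
  show "\<rho>\<^sup>2 / (1 - \<rho>\<^sup>2) \<le> 4/3 * Q" "\<alpha>\<^sup>2 / (1 - \<rho>\<^sup>2) \<le> 4/3 * (e * Q)"
    "\<beta>\<^sup>2 / (1 - \<rho>\<^sup>2) \<le> 4/3 * (e * Q)"
    by (rule div_A[OF Q(1)] div_A[OF Q(2)] div_A[OF Q(3)]; simp)+
  have "(\<rho> * \<alpha> * \<beta> / (1 - \<rho>\<^sup>2))\<^sup>2 = \<rho>\<^sup>2 * \<alpha>\<^sup>2 * \<beta>\<^sup>2 / (1 - \<rho>\<^sup>2)\<^sup>2"
    by (simp add: power_mult_distrib power_divide)
  also have "\<dots> \<le> Q * (e * Q) * (e * Q) / (3/4)\<^sup>2"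
    using Q A Q0 assms(2) by (intro frac_le mult_mono power_mono mult_nonneg_nonneg) auto
  also have "\<dots> = 16/9 * (e\<^sup>2 * Q) * (Q * Q)"
    by (simp add: power2_eq_square field_simps)
  also have "\<dots> \<le> 16/9 * (e\<^sup>2 * Q) * 1"
    using assms(4) Q0 by (intro mult_left_mono mult_le_one) auto
  also have "\<dots> \<le> 2 * (e\<^sup>2 * Q)"
    using Q0 by simp
  finally have cross: "(\<rho> * \<alpha> * \<beta> / (1 - \<rho>\<^sup>2))\<^sup>2 \<le> 2 * (e\<^sup>2 * Q)" .
  have "(\<kappa> + \<rho> * \<alpha> * \<beta> / (1 - \<rho>\<^sup>2))\<^sup>2 + (\<kappa> - \<rho> * \<alpha> * \<beta> / (1 - \<rho>\<^sup>2))\<^sup>2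
      = 2 * \<kappa>\<^sup>2 + 2 * (\<rho> * \<alpha> * \<beta> / (1 - \<rho>\<^sup>2))\<^sup>2"
    by (simp add: power2_eq_square algebra_simps)
  moreover have "0 \<le> (\<kappa> - \<rho> * \<alpha> * \<beta> / (1 - \<rho>\<^sup>2))\<^sup>2"
    by simp
  ultimately show "(\<kappa> + \<rho> * \<alpha> * \<beta> / (1 - \<rho>\<^sup>2))\<^sup>2 \<le> 6 * (e\<^sup>2 * Q)"
    using cross Q(4) by linarith
qed

lemma regression_det_near_diag:
  fixes e l \<rho> \<alpha> \<beta> \<kappa> :: real
  defines "Q \<equiv> \<rho>\<^sup>2 + \<alpha>\<^sup>2 / e + \<beta>\<^sup>2 / e + \<kappa>\<^sup>2 / e\<^sup>2"
  assumes l: "0 < l" and e: "0 < e" and \<rho>: "\<bar>\<rho>\<bar> \<le> 1/2"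
    and small: "Q \<le> 1" "(32 * l + 72) * Q \<le> 9 * l\<^sup>2"
  shows "(l * e)\<^sup>2 / 4
    \<le> (l * e - \<alpha>\<^sup>2 / (1 - \<rho>\<^sup>2)) * (l * e - \<beta>\<^sup>2 / (1 - \<rho>\<^sup>2)) - (\<kappa> + \<rho> * \<alpha> * \<beta> / (1 - \<rho>\<^sup>2))\<^sup>2"
proof (rule det_ge_near_diag[where x = "4/3 * (e * Q)" and y = "6 * (e\<^sup>2 * Q)"])
  note terms = regression_terms_le[OF e \<rho> small(1)[unfolded Q_def], folded Q_def]
  have A: "0 < 1 - \<rho>\<^sup>2"
    using one_minus_square_ge[OF \<rho>] by simp
  show "0 < l * e"
    using l e by simp
  show "0 \<le> l * e - (l * e - \<alpha>\<^sup>2 / (1 - \<rho>\<^sup>2))" "l * e - (l * e - \<alpha>\<^sup>2 / (1 - \<rho>\<^sup>2)) \<le> 4/3 * (e * Q)"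
    "0 \<le> l * e - (l * e - \<beta>\<^sup>2 / (1 - \<rho>\<^sup>2))" "l * e - (l * e - \<beta>\<^sup>2 / (1 - \<rho>\<^sup>2)) \<le> 4/3 * (e * Q)"
    "(\<kappa> + \<rho> * \<alpha> * \<beta> / (1 - \<rho>\<^sup>2))\<^sup>2 \<le> 6 * (e\<^sup>2 * Q)"
    using terms A by simp_all
  have "(8/3 * l + 6) * Q = (32 * l + 72) * Q / 12"
    by (simp add: field_simps)
  then have "(8/3 * l + 6) * Q \<le> 3/4 * l\<^sup>2"
    using small(2) by linarith
  then have "e\<^sup>2 * ((8/3 * l + 6) * Q) \<le> e\<^sup>2 * (3/4 * l\<^sup>2)"
    by (intro mult_left_mono) auto
  then show "2 * (l * e) * (4/3 * (e * Q)) + 6 * (e\<^sup>2 * Q) \<le> 3/4 * (l * e)\<^sup>2"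
    by (simp add: power2_eq_square algebra_simps)
qed

lemma gauss_abs_prod_exp_regression_near:
  fixes e l \<rho> \<alpha> \<beta> \<kappa> :: real
  defines "Q \<equiv> \<rho>\<^sup>2 + \<alpha>\<^sup>2 / e + \<beta>\<^sup>2 / e + \<kappa>\<^sup>2 / e\<^sup>2"
    and "c \<equiv> (8/3 + 6 / l) * (2 / pi) + 6 / l * (4 * sqrt (2 / pi))"
  assumes l: "0 < l" and e: "0 < e" and \<rho>: "\<bar>\<rho>\<bar> \<le> 1/2"
    and small: "Q \<le> 1" "Q \<le> 3 * l / 4" "(32 * l + 72) * Q \<le> 9 * l\<^sup>2"
  shows "\<bar>gauss_abs_prod_exp (l * e - \<alpha>\<^sup>2 / (1 - \<rho>\<^sup>2)) (\<kappa> + \<rho> * \<alpha> * \<beta> / (1 - \<rho>\<^sup>2)) (l * e - \<beta>\<^sup>2 / (1 - \<rho>\<^sup>2))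
           - l * e * (2 / pi)\<bar> \<le> c * e * Q"
proof -
  define v where "v = l * e"
  define A where "A = 1 - \<rho>\<^sup>2"
  define a where "a = v - \<alpha>\<^sup>2 / A"
  define b where "b = \<kappa> + \<rho> * \<alpha> * \<beta> / A"
  define c' where "c' = v - \<beta>\<^sup>2 / A"
  note terms = regression_terms_le[OF e \<rho> small(1)[unfolded Q_def], folded Q_def A_def, folded b_def]
  have v: "0 < v"
    using l e by (simp add: v_def)
  have A: "0 < A"
    using one_minus_square_ge[OF \<rho>] by (simp add: A_def)
  have "4/3 * (e * Q) \<le> v"
    using small(2) e by (simp add: v_def)
  then have a: "0 \<le> a" "a \<le> v" "v - a \<le> 4/3 * (e * Q)" and c': "0 \<le> c'" "c' \<le> v" "v - c' \<le> 4/3 * (e * Q)"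
    using terms(2,3) divide_nonneg_pos[OF zero_le_power2[of \<alpha>] A] divide_nonneg_pos[OF zero_le_power2[of \<beta>] A]
    unfolding a_def c'_def by linarith+
  have det: "v\<^sup>2 / 4 \<le> a * c' - b\<^sup>2"
    using regression_det_near_diag[OF l e \<rho> small(1)[unfolded Q_def] small(3)[unfolded Q_def]]
    by (simp add: v_def a_def b_def c'_def A_def)
  have "b\<^sup>2 / v \<le> 6 * (e\<^sup>2 * Q) / v"
    using terms(4) v by (intro divide_right_mono) auto
  also have "\<dots> = 6 / l * (e * Q)"
    using e l by (simp add: v_def power2_eq_square field_simps)
  finally have b: "b\<^sup>2 / v \<le> 6 / l * (e * Q)" .
  have "\<bar>gauss_abs_prod_exp a b c' - v * (2 / pi)\<bar>
      \<le> ((v - a) + (v - c') + b\<^sup>2 / v) * (2 / pi) + b\<^sup>2 / v * (4 * sqrt (2 / pi))"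
    by (rule gauss_abs_prod_exp_near_diag[OF v a(1,2) c'(1,2) det])
  also have "\<dots> \<le> (8/3 * (e * Q) + 6 / l * (e * Q)) * (2 / pi) + 6 / l * (e * Q) * (4 * sqrt (2 / pi))"
    using a(3) c'(3) b by (intro add_mono mult_right_mono) auto
  also have "\<dots> = c * e * Q"
    by (simp add: c_def algebra_simps)
  finally show ?thesis
    by (simp add: v_def a_def b_def c'_def A_def)
qed

lemma K2_of_cov_near_diag:
  fixes e l \<rho> \<alpha> \<beta> \<kappa> :: real
  defines "Q \<equiv> \<rho>\<^sup>2 + \<alpha>\<^sup>2 / e + \<beta>\<^sup>2 / e + \<kappa>\<^sup>2 / e\<^sup>2"
    and "c \<equiv> (8/3 + 6 / l) * (2 / pi) + 6 / l * (4 * sqrt (2 / pi))"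
  assumes l: "0 < l" and e: "0 < e" and \<rho>: "\<bar>\<rho>\<bar> \<le> 1/2"
    and small: "Q \<le> 1" "Q \<le> 3 * l / 4" "(32 * l + 72) * Q \<le> 9 * l\<^sup>2"
  shows "\<bar>K2_of_cov (l * e) \<rho> \<alpha> \<beta> \<kappa> - l * e / pi\<^sup>2\<bar> \<le> (4/3 * (2 * l / pi + c) + c) * e * Q"
proof -
  define A where "A = 1 - \<rho>\<^sup>2"
  define w where "w = l * e * (2 / pi)"
  define G where "G = gauss_abs_prod_exp (l * e - \<alpha>\<^sup>2 / A) (\<kappa> + \<rho> * \<alpha> * \<beta> / A) (l * e - \<beta>\<^sup>2 / A)"
  have A: "0 < A" "A \<le> 1"
    using one_minus_square_ge[OF \<rho>] by (auto simp: A_def)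
  have Q: "0 \<le> Q" "0 \<le> c"
    using e l by (simp_all add: Q_def c_def)
  have "\<bar>G - w\<bar> \<le> c * e * Q"
    using gauss_abs_prod_exp_regression_near[OF l e \<rho> small[unfolded Q_def]]
    by (simp add: G_def A_def w_def Q_def c_def)
  then have "\<bar>G / sqrt A - w\<bar> \<le> (w + c * e * Q) * (1 / A - 1) + c * e * Q"
    using A l e by (intro abs_div_sqrt_sub_le) (auto simp: w_def)
  also have "\<dots> \<le> e * (2 * l / pi + c) * (4/3 * Q) + c * e * Q"
  proof (intro add_right_mono mult_mono)
    show "w + c * e * Q \<le> e * (2 * l / pi + c)"
      using small(1) Q e by (simp add: w_def algebra_simps mult_left_le_one_le)
    have "1 / A - 1 = \<rho>\<^sup>2 / A"
      using A by (simp add: A_def field_simps)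
    then show "1 / A - 1 \<le> 4/3 * Q"
      using regression_terms_le(1)[OF e \<rho> small(1)[unfolded Q_def]] by (simp add: A_def Q_def)
  qed (use A Q e l in auto)
  finally have main: "\<bar>G / sqrt A - w\<bar> \<le> (4/3 * (2 * l / pi + c) + c) * e * Q"
    by (simp add: algebra_simps)
  have "K2_of_cov (l * e) \<rho> \<alpha> \<beta> \<kappa> - l * e / pi\<^sup>2 = (G / sqrt A - w) / (2 * pi)"
    by (simp add: K2_of_cov_def G_def A_def w_def power2_eq_square field_simps)
  also have "\<bar>\<dots>\<bar> \<le> \<bar>G / sqrt A - w\<bar>"
    using pi_gt3 mult_left_mono[of 1 "2 * pi" "\<bar>G / sqrt A - w\<bar>"] by (simp add: abs_divide divide_le_eq)
  finally show ?thesis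
    using main by linarith
qed

lemma regression_diag_bounded:
  fixes e l \<rho> \<alpha> :: real
  assumes l: "0 < l" and e: "0 < e" and \<rho>: "\<bar>\<rho>\<bar> \<le> 1/2" and \<alpha>: "\<alpha>\<^sup>2 \<le> 4 * pi\<^sup>2 * e"
  shows "\<bar>l * e - \<alpha>\<^sup>2 / (1 - \<rho>\<^sup>2)\<bar> \<le> l * e + 7 * (pi\<^sup>2 * e)"
proof -
  have "\<alpha>\<^sup>2 / (1 - \<rho>\<^sup>2) \<le> \<alpha>\<^sup>2 / (3/4)"
    using one_minus_square_ge[OF \<rho>] by (intro divide_left_mono) auto
  then have "\<alpha>\<^sup>2 / (1 - \<rho>\<^sup>2) \<le> 4/3 * \<alpha>\<^sup>2"
    by simp
  moreover have "0 \<le> \<alpha>\<^sup>2 / (1 - \<rho>\<^sup>2)"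
    using one_minus_square_ge[OF \<rho>] by simp
  moreover have "0 \<le> pi\<^sup>2 * e" "0 \<le> l * e" "\<alpha>\<^sup>2 \<le> 4 * (pi\<^sup>2 * e)"
    using l e \<alpha> by (simp_all add: mult.assoc)
  ultimately show ?thesis
    unfolding abs_le_iff by (intro conjI; linarith)
qed

lemma regression_offdiag_bounded:
  fixes e \<rho> \<alpha> \<beta> \<kappa> :: real
  assumes e: "0 < e" and \<rho>: "\<bar>\<rho>\<bar> \<le> 1/2"
    and \<alpha>: "\<alpha>\<^sup>2 \<le> 4 * pi\<^sup>2 * e" and \<beta>: "\<beta>\<^sup>2 \<le> 4 * pi\<^sup>2 * e" and \<kappa>: "\<kappa>\<^sup>2 \<le> (4 * pi\<^sup>2 * e)\<^sup>2"
  shows "\<bar>\<kappa> + \<rho> * \<alpha> * \<beta> / (1 - \<rho>\<^sup>2)\<bar> \<le> 7 * (pi\<^sup>2 * e)"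
proof -
  define A where "A = 1 - \<rho>\<^sup>2"
  have A: "3/4 \<le> A"
    unfolding A_def using \<rho> by (rule one_minus_square_ge)
  have pe: "0 \<le> pi\<^sup>2 * e" "0 \<le> e * pi\<^sup>2"
    using e by simp_all
  have "\<bar>\<kappa>\<bar> \<le> \<bar>4 * pi\<^sup>2 * e\<bar>"
    using \<kappa> by (simp only: abs_le_square_iff)
  then have \<kappa>_abs: "\<bar>\<kappa>\<bar> \<le> 4 * (pi\<^sup>2 * e)"
    using e by (simp add: mult.assoc)
  have "\<alpha>\<^sup>2 * \<beta>\<^sup>2 \<le> (4 * pi\<^sup>2 * e) * (4 * pi\<^sup>2 * e)"
    using \<alpha> \<beta> pe by (intro mult_mono) auto
  then have "(\<alpha> * \<beta>)\<^sup>2 \<le> (4 * pi\<^sup>2 * e)\<^sup>2"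
    by (simp only: power_mult_distrib[of \<alpha> \<beta> 2] power2_eq_square[of "4 * pi\<^sup>2 * e"])
  then have "\<bar>\<alpha> * \<beta>\<bar> \<le> 4 * pi\<^sup>2 * e"
    using e by (simp flip: abs_le_square_iff)
  then have "\<bar>\<rho>\<bar> * \<bar>\<alpha> * \<beta>\<bar> / A \<le> 1/2 * (4 * pi\<^sup>2 * e) / (3/4)"
    using \<rho> A pe by (intro frac_le mult_mono) auto
  moreover have "\<bar>\<rho> * \<alpha> * \<beta> / A\<bar> = \<bar>\<rho>\<bar> * \<bar>\<alpha> * \<beta>\<bar> / A"
    using A by (simp add: abs_mult abs_divide)
  ultimately have "\<bar>\<rho> * \<alpha> * \<beta> / A\<bar> \<le> 8/3 * (pi\<^sup>2 * e)"
    by (simp add: mult_ac)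
  then have "\<bar>\<kappa> + \<rho> * \<alpha> * \<beta> / A\<bar> \<le> 4 * (pi\<^sup>2 * e) + 8/3 * (pi\<^sup>2 * e)"
    using \<kappa>_abs by (intro order_trans[OF abs_triangle_ineq] add_mono)
  moreover have "4 * (pi\<^sup>2 * e) + 8/3 * (pi\<^sup>2 * e) \<le> 7 * (pi\<^sup>2 * e)"
    using pe by linarith
  ultimately show ?thesis
    unfolding A_def by (rule order_trans)
qed

lemma K2_of_cov_bounded:
  fixes e l \<rho> \<alpha> \<beta> \<kappa> :: real
  assumes l: "0 < l" and e: "0 < e" and \<rho>: "\<bar>\<rho>\<bar> \<le> 1/2"
    and bounds: "\<alpha>\<^sup>2 \<le> 4 * pi\<^sup>2 * e" "\<beta>\<^sup>2 \<le> 4 * pi\<^sup>2 * e" "\<kappa>\<^sup>2 \<le> (4 * pi\<^sup>2 * e)\<^sup>2"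
  shows "\<bar>K2_of_cov (l * e) \<rho> \<alpha> \<beta> \<kappa> - l * e / pi\<^sup>2\<bar> \<le> (3 * (l + 7 * pi\<^sup>2) + l) * e"
proof -
  define A where "A = 1 - \<rho>\<^sup>2"
  define G where "G = gauss_abs_prod_exp (l * e - \<alpha>\<^sup>2 / A) (\<kappa> + \<rho> * \<alpha> * \<beta> / A) (l * e - \<beta>\<^sup>2 / A)"
  have "\<bar>\<kappa> + \<rho> * \<alpha> * \<beta> / A\<bar> \<le> l * e + 7 * (pi\<^sup>2 * e)"
    using regression_offdiag_bounded[OF e \<rho> bounds] l e unfolding A_def by (simp add: add_increasing)
  then have G: "\<bar>G\<bar> \<le> 3 * (l * e + 7 * (pi\<^sup>2 * e))"
    unfolding G_def A_def
    by (intro abs_gauss_abs_prod_exp_le_bound regression_diag_bounded[OF l e \<rho>] bounds(1,2))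
  have "1/2 \<le> sqrt A"
    using one_minus_square_ge[OF \<rho>] by (intro real_le_rsqrt) (simp add: A_def power2_eq_square)
  then have "3 * (1/2) \<le> pi * sqrt A"
    using pi_gt3 by (intro mult_mono) auto
  then have "\<bar>G\<bar> / (2 * pi * sqrt A) \<le> \<bar>G\<bar> / 1"
    by (intro divide_left_mono) (auto simp: mult.assoc)
  then have K2: "\<bar>K2_of_cov (l * e) \<rho> \<alpha> \<beta> \<kappa>\<bar> \<le> 3 * (l * e + 7 * (pi\<^sup>2 * e))"
    using G one_minus_square_ge[OF \<rho>] by (simp add: K2_of_cov_def G_def A_def abs_divide)
  have "1 \<le> pi\<^sup>2"
    using pi_gt3 by (intro one_le_power) simp
  then have "l * e / pi\<^sup>2 \<le> l * e / 1"
    using l e by (intro divide_left_mono) auto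
  then have "\<bar>l * e / pi\<^sup>2\<bar> \<le> l * e"
    using l e by simp
  then have "\<bar>K2_of_cov (l * e) \<rho> \<alpha> \<beta> \<kappa> - l * e / pi\<^sup>2\<bar> \<le> 3 * (l * e + 7 * (pi\<^sup>2 * e)) + l * e"
    using K2 by (intro order_trans[OF abs_triangle_ineq4] add_mono)
  also have "\<dots> = (3 * (l + 7 * pi\<^sup>2) + l) * e"
    by (simp add: algebra_simps)
  finally show ?thesis .
qed

lemma K2_of_cov_approx:
  fixes l :: real
  assumes l: "0 < l"
  obtains C where "\<And>e \<rho> \<alpha> \<beta> \<kappa>. 0 < e \<Longrightarrow> \<bar>\<rho>\<bar> \<le> 1/2 \<Longrightarrow>
      \<alpha>\<^sup>2 \<le> 4 * pi\<^sup>2 * e \<Longrightarrow> \<beta>\<^sup>2 \<le> 4 * pi\<^sup>2 * e \<Longrightarrow> \<kappa>\<^sup>2 \<le> (4 * pi\<^sup>2 * e)\<^sup>2 \<Longrightarrow>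
      \<bar>K2_of_cov (l * e) \<rho> \<alpha> \<beta> \<kappa> - l * e / pi\<^sup>2\<bar> \<le> C * e * (\<rho>\<^sup>2 + \<alpha>\<^sup>2 / e + \<beta>\<^sup>2 / e + \<kappa>\<^sup>2 / e\<^sup>2)"
proof -
  define \<epsilon> where "\<epsilon> = min 1 (min (3 * l / 4) (9 * l\<^sup>2 / (32 * l + 72)))"
  define c where "c = (8/3 + 6 / l) * (2 / pi) + 6 / l * (4 * sqrt (2 / pi))"
  define Cs where "Cs = 4/3 * (2 * l / pi + c) + c"
  define Cb where "Cb = 3 * (l + 7 * pi\<^sup>2) + l"
  have \<epsilon>: "0 < \<epsilon>" and Cs: "0 \<le> Cs" and Cb: "0 \<le> Cb"
    using l by (simp_all add: \<epsilon>_def Cs_def c_def Cb_def)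
  show ?thesis
  proof (rule that[of "Cs + Cb / \<epsilon>"])
    fix e \<rho> \<alpha> \<beta> \<kappa> :: real
    assume e: "0 < e" and \<rho>: "\<bar>\<rho>\<bar> \<le> 1/2" and bounds: "\<alpha>\<^sup>2 \<le> 4 * pi\<^sup>2 * e" "\<beta>\<^sup>2 \<le> 4 * pi\<^sup>2 * e"
      "\<kappa>\<^sup>2 \<le> (4 * pi\<^sup>2 * e)\<^sup>2"
    define Q where "Q = \<rho>\<^sup>2 + \<alpha>\<^sup>2 / e + \<beta>\<^sup>2 / e + \<kappa>\<^sup>2 / e\<^sup>2"
    have Q: "0 \<le> Q"
      using e by (simp add: Q_def)
    have "\<bar>K2_of_cov (l * e) \<rho> \<alpha> \<beta> \<kappa> - l * e / pi\<^sup>2\<bar> \<le> (Cs + Cb / \<epsilon>) * e * Q"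
    proof (cases "Q \<le> \<epsilon>")
      case True
      then have "Q \<le> 1" "Q \<le> 3 * l / 4" "(32 * l + 72) * Q \<le> 9 * l\<^sup>2"
        using l by (auto simp: \<epsilon>_def pos_le_divide_eq mult.commute)
      then have "\<bar>K2_of_cov (l * e) \<rho> \<alpha> \<beta> \<kappa> - l * e / pi\<^sup>2\<bar> \<le> Cs * e * Q"
        unfolding Cs_def c_def Q_def by (rule K2_of_cov_near_diag[OF l e \<rho>])
      also have "\<dots> \<le> (Cs + Cb / \<epsilon>) * e * Q"
        using Cb \<epsilon> e Q by (intro mult_right_mono) auto
      finally show ?thesis .
    next
      case False
      have "\<bar>K2_of_cov (l * e) \<rho> \<alpha> \<beta> \<kappa> - l * e / pi\<^sup>2\<bar> \<le> Cb * e"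
        unfolding Cb_def by (rule K2_of_cov_bounded[OF l e \<rho> bounds])
      also have "\<dots> = Cb / \<epsilon> * e * \<epsilon>"
        using \<epsilon> by simp
      also have "\<dots> \<le> (Cs + Cb / \<epsilon>) * e * Q"
        using False Cs Cb \<epsilon> e by (intro mult_mono) auto
      finally show ?thesis .
    qed
    then show "\<bar>K2_of_cov (l * e) \<rho> \<alpha> \<beta> \<kappa> - l * e / pi\<^sup>2\<bar> \<le> (Cs + Cb / \<epsilon>) * e
        * (\<rho>\<^sup>2 + \<alpha>\<^sup>2 / e + \<beta>\<^sup>2 / e + \<kappa>\<^sup>2 / e\<^sup>2)"
      by (simp only: Q_def)
  qed
qed

lemma square_le_of_abs_le:
  fixes x B :: real
  assumes "\<bar>x\<bar> \<le> B"
  shows "x\<^sup>2 \<le> B\<^sup>2"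
  using assms abs_le_square_iff[of x B] by (simp add: abs_of_nonneg order_trans[OF abs_ge_zero assms])

lemma K2_minus_K1_K1_bound:
  fixes \<gamma> g :: "real \<Rightarrow> real^'d" and T :: "real set"
  assumes deriv: "\<And>t. t \<in> T \<Longrightarrow> (\<gamma> has_vector_derivative g t) (at t)"
    and unit: "\<And>t. t \<in> T \<Longrightarrow> norm (g t) = 1"
  obtains C where "\<And>E t1 t2. 0 < E \<Longrightarrow> (lattice_pts E :: (int^'d) set) \<noteq> {} \<Longrightarrow> t1 \<in> T \<Longrightarrow> t2 \<in> T \<Longrightarrow>
      \<bar>cov_r \<gamma> E t1 t2\<bar> \<le> 1/2 \<Longrightarrow>
      \<bar>K2 \<gamma> E t1 t2 - K1 \<gamma> E t1 * K1 \<gamma> E t2\<bar>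
        \<le> C * real E * ((cov_r \<gamma> E t1 t2)\<^sup>2 + (cov_r1 \<gamma> E t1 t2 / sqrt (real E))\<^sup>2
             + (cov_r2 \<gamma> E t1 t2 / sqrt (real E))\<^sup>2 + (cov_r12 \<gamma> E t1 t2 / real E)\<^sup>2)"
proof -
  define l where "l = 4 * pi\<^sup>2 / real CARD('d)"
  have "0 < l"
    by (simp add: l_def)
  then obtain C where C: "\<And>e \<rho> \<alpha> \<beta> \<kappa>. 0 < e \<Longrightarrow> \<bar>\<rho>\<bar> \<le> 1/2 \<Longrightarrow>
      \<alpha>\<^sup>2 \<le> 4 * pi\<^sup>2 * e \<Longrightarrow> \<beta>\<^sup>2 \<le> 4 * pi\<^sup>2 * e \<Longrightarrow> \<kappa>\<^sup>2 \<le> (4 * pi\<^sup>2 * e)\<^sup>2 \<Longrightarrow>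
      \<bar>K2_of_cov (l * e) \<rho> \<alpha> \<beta> \<kappa> - l * e / pi\<^sup>2\<bar> \<le> C * e * (\<rho>\<^sup>2 + \<alpha>\<^sup>2 / e + \<beta>\<^sup>2 / e + \<kappa>\<^sup>2 / e\<^sup>2)"
    using K2_of_cov_approx by blast
  show ?thesis
  proof (rule that[of C])
    fix E :: nat and t1 t2 :: real
    assume E: "0 < E" and nonempty: "(lattice_pts E :: (int^'d) set) \<noteq> {}"
      and t1: "t1 \<in> T" and t2: "t2 \<in> T" and \<rho>: "\<bar>cov_r \<gamma> E t1 t2\<bar> \<le> 1/2"
    have "(cov_r \<gamma> E t1 t2)\<^sup>2 \<le> (1/2)\<^sup>2"
      using square_le_of_abs_le[OF \<rho>] .
    then have \<rho>_sq: "(cov_r \<gamma> E t1 t2)\<^sup>2 \<noteq> 1"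
      by (auto simp: power2_eq_square)
    have "\<bar>cov_r1 \<gamma> E t1 t2\<bar> \<le> 2 * pi * sqrt (real E)" "\<bar>cov_r2 \<gamma> E t1 t2\<bar> \<le> 2 * pi * sqrt (real E)"
      "\<bar>cov_r12 \<gamma> E t1 t2\<bar> \<le> 4 * pi\<^sup>2 * real E"
      using abs_cov_r1_sum_le[where \<gamma>=\<gamma> and g=g and s=t1 and t=t2, OF nonempty unit[OF t1]]
        abs_cov_r1_sum_le[where \<gamma>=\<gamma> and g=g and s=t2 and t=t1, OF nonempty unit[OF t2]]
        abs_cov_r12_sum_le[where \<gamma>=\<gamma> and g=g and s=t2 and t=t1, OF nonempty unit[OF t2] unit[OF t1]]
      by (simp_all add: cov_r1_eq_sum[where g=g, OF deriv[OF t1]] cov_r2_eq_cov_r1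
            cov_r1_eq_sum[where g=g, OF deriv[OF t2]] cov_r12_eq_sum[where g=g, OF deriv[OF t1] deriv[OF t2]])
    then have bounds: "(cov_r1 \<gamma> E t1 t2)\<^sup>2 \<le> 4 * pi\<^sup>2 * real E" "(cov_r2 \<gamma> E t1 t2)\<^sup>2 \<le> 4 * pi\<^sup>2 * real E"
      "(cov_r12 \<gamma> E t1 t2)\<^sup>2 \<le> (4 * pi\<^sup>2 * real E)\<^sup>2"
      by (auto dest!: square_le_of_abs_le simp: power_mult_distrib)
    have "K2 \<gamma> E t1 t2 = K2_of_cov (l * real E)
        (cov_r \<gamma> E t1 t2) (cov_r1 \<gamma> E t1 t2) (cov_r2 \<gamma> E t1 t2) (cov_r12 \<gamma> E t1 t2)"
      using K2_eq_K2_of_cov[where g=g, OF nonempty deriv[OF t1] unit[OF t1] deriv[OF t2] unit[OF t2] \<rho>_sq]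
      by (simp add: l_def)
    moreover have "K1 \<gamma> E t1 * K1 \<gamma> E t2 = l * real E / pi\<^sup>2"
      using K1_eq[where g=g, OF nonempty deriv[OF t1] unit[OF t1]] K1_eq[where g=g, OF nonempty deriv[OF t2] unit[OF t2]]
      by (simp add: l_def power2_eq_square real_sqrt_mult[symmetric])
    ultimately show "\<bar>K2 \<gamma> E t1 t2 - K1 \<gamma> E t1 * K1 \<gamma> E t2\<bar>
        \<le> C * real E * ((cov_r \<gamma> E t1 t2)\<^sup>2 + (cov_r1 \<gamma> E t1 t2 / sqrt (real E))\<^sup>2
             + (cov_r2 \<gamma> E t1 t2 / sqrt (real E))\<^sup>2 + (cov_r12 \<gamma> E t1 t2 / real E)\<^sup>2)"
      using C[OF _ \<rho> bounds] E by (simp add: power_divide)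
  qed
qed

lemma smooth_on_unit_speed:
  fixes \<gamma> :: "real \<Rightarrow> real^'d"
  assumes "smooth_on S \<gamma>" and "T \<subseteq> S" and unit: "\<forall>t\<in>T. norm (vector_derivative \<gamma> (at t)) = 1"
  obtains g where "\<And>t. t \<in> T \<Longrightarrow> (\<gamma> has_vector_derivative g t) (at t)" and "\<And>t. t \<in> T \<Longrightarrow> norm (g t) = 1"
proof -
  obtain D :: "nat \<Rightarrow> real \<Rightarrow> real^'d" where S: "open S" and D0: "\<forall>t\<in>S. D 0 t = \<gamma> t"
    and D: "\<forall>n. \<forall>t\<in>S. (D n has_vector_derivative D (Suc n) t) (at t)"
    using assms(1) unfolding smooth_on_def by blast
  have deriv: "(\<gamma> has_vector_derivative D 1 t) (at t)" if "t \<in> T" for t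
  proof -
    have t: "t \<in> S"
      using that assms(2) by auto
    then have "(D 0 has_vector_derivative D 1 t) (at t)"
      using D by simp
    then show ?thesis
      by (rule has_vector_derivative_transform_within_open[OF _ S t]) (use D0 in auto)
  qed
  moreover have "norm (D 1 t) = 1" if "t \<in> T" for t
    using vector_derivative_at[OF deriv[OF that]] bspec[OF unit that] by simp
  ultimately show ?thesis
    using that by blast
qed

theorem lemma2p9:
  fixes \<gamma> :: "real \<Rightarrow> real^'d" and L :: real
  assumes "CARD('d) \<ge> 3"
    and "L > 0"
    and "\<exists>S. {0..L} \<subseteq> S \<and> smooth_on S \<gamma>"
    and "\<forall>t\<in>{0..L}. norm (vector_derivative \<gamma> (at t)) = 1"
  shows "\<exists>c>0. \<forall>c0. 0 < c0 \<and> c0 \<le> c \<longrightarrow>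
           (\<exists>C. \<forall>E::nat. E > 0 \<longrightarrow> (lattice_pts E :: (int^'d) set) \<noteq> {} \<longrightarrow>
              (\<forall>t1 t2. t1 \<in> {0..L} \<and> t2 \<in> {0..L} \<and> (t1, t2) \<notin> sing_set \<gamma> L E c0 \<longrightarrow>
                 \<bar>K2 \<gamma> E t1 t2 - K1 \<gamma> E t1 * K1 \<gamma> E t2\<bar>
                   \<le> C * real E * ((cov_r \<gamma> E t1 t2)^2
                        + (cov_r1 \<gamma> E t1 t2 / sqrt (real E))^2
                        + (cov_r2 \<gamma> E t1 t2 / sqrt (real E))^2
                        + (cov_r12 \<gamma> E t1 t2 / real E)^2)))"
proof -
  obtain S where S: "{0..L} \<subseteq> S" "smooth_on S \<gamma>"
    using assms(3) by blast
  obtain g where deriv: "\<And>t. t \<in> {0..L} \<Longrightarrow> (\<gamma> has_vector_derivative g t) (at t)"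
    and unit: "\<And>t. t \<in> {0..L} \<Longrightarrow> norm (g t) = 1"
    using smooth_on_unit_speed[OF S(2) S(1) assms(4)] by blast
  obtain C where C: "\<And>E t1 t2. 0 < E \<Longrightarrow> (lattice_pts E :: (int^'d) set) \<noteq> {} \<Longrightarrow>
      t1 \<in> {0..L} \<Longrightarrow> t2 \<in> {0..L} \<Longrightarrow> \<bar>cov_r \<gamma> E t1 t2\<bar> \<le> 1/2 \<Longrightarrow>
      \<bar>K2 \<gamma> E t1 t2 - K1 \<gamma> E t1 * K1 \<gamma> E t2\<bar>
        \<le> C * real E * ((cov_r \<gamma> E t1 t2)\<^sup>2 + (cov_r1 \<gamma> E t1 t2 / sqrt (real E))\<^sup>2
             + (cov_r2 \<gamma> E t1 t2 / sqrt (real E))\<^sup>2 + (cov_r12 \<gamma> E t1 t2 / real E)\<^sup>2)"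
    using K2_minus_K1_K1_bound[OF deriv unit] by blast
  show ?thesis
    by (intro exI[of _ "1::real"] conjI allI impI exI[of _ C])
       (auto intro!: C abs_cov_r_le_half_outside_sing_set[OF assms(2)])
qed

end
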